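(* Under the same setup ($N\ge2$, $\mathcal G$ connected with positive edge weights, $\alpha>0$), for all $m,k,\tau,\gamma>0$ one has $\|H_{\mathrm{DAPI}}\|_2^2<\|H_{\mathrm{std}}\|_2^2$.
   Context: $L_B$ is the weighted Laplacian of $\mathcal G$ (edge weights $b_{ij}>0$), $L_G=\alpha L_B$, $L_C=\gamma L_B$, $L_G^{1/2}$ its PSD square root. $H_{\mathrm{std}}$: $\dot\theta=\omega$, $\dot\omega=-\tfrac m\tau L_B\theta-\tfrac1\tau\omega+\tfrac1\tau w$, $y=L_G^{1/2}\theta$. $H_{\mathrm{DAPI}}$: $\dot\theta=\omega$, $\dot\omega=-\tfrac m\tau L_B\theta-\tfrac1\tau\omega+\tfrac1\tau\Omega+\tfrac1\tau w$, $\dot\Omega=-\tfrac1k\omega-\tfrac1kL_C\Omega$, $y=L_G^{1/2}\theta$. For a system $(A,B,C)$, $\|H\|_2^2:=\int_0^\infty\operatorname{tr}(Ce^{At}BB^Te^{A^Tt}C^T)\,dt$. *)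

theory Defs
  imports "HOL-Analysis.Analysis"
begin

primrec matpow :: "real^'a^'a \<Rightarrow> nat \<Rightarrow> real^'a^'a" where
  "matpow A 0 = mat 1"
| "matpow A (Suc k) = A ** matpow A k"

definition mexp :: "real^'a^'a \<Rightarrow> real^'a^'a" where
  "mexp A = (\<chi> i j. \<Sum>k. (matpow A k $ i $ j) / fact k)"

definition h2sq :: "real^'s^'s \<Rightarrow> real^'u^'s \<Rightarrow> real^'s^'y \<Rightarrow> real" where
  "h2sq A B C = (LINT t:{0..}|lborel.
      trace (C ** mexp (t *\<^sub>R A) ** B ** transpose B ** mexp (t *\<^sub>R transpose A) ** transpose C))"

definition psd :: "real^'n^'n \<Rightarrow> bool" where
  "psd M \<longleftrightarrow> transpose M = M \<and> (\<forall>x. 0 \<le> x \<bullet> (M *v x))"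

definition psd_sqrt :: "real^'n^'n \<Rightarrow> real^'n^'n" where
  "psd_sqrt M = (THE S. psd S \<and> S ** S = M)"

definition laplacian :: "('n::finite \<Rightarrow> 'n \<Rightarrow> real) \<Rightarrow> real^'n^'n" where
  "laplacian b = (\<chi> i j. if i = j then (\<Sum>k\<in>UNIV - {i}. b i k) else - b i j)"

definition connected_weights :: "('n \<Rightarrow> 'n \<Rightarrow> real) \<Rightarrow> bool" where
  "connected_weights b \<longleftrightarrow> (\<forall>i j. (i, j) \<in> {(x, y). b x y > 0}\<^sup>*)"

fun bidx2 :: "'n + 'n \<Rightarrow> nat \<times> 'n" where
  "bidx2 (Inl i) = (0, i)"
| "bidx2 (Inr i) = (1, i)"

fun bidx3 :: "('n + 'n) + 'n \<Rightarrow> nat \<times> 'n" where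
  "bidx3 (Inl (Inl i)) = (0, i)"
| "bidx3 (Inl (Inr i)) = (1, i)"
| "bidx3 (Inr i) = (2, i)"

definition blk2 :: "(nat \<Rightarrow> nat \<Rightarrow> real^'n^'n) \<Rightarrow> real^('n+'n)^('n+'n)" where
  "blk2 F = (\<chi> r c. F (fst (bidx2 r)) (fst (bidx2 c)) $ snd (bidx2 r) $ snd (bidx2 c))"

definition blkcol2 :: "(nat \<Rightarrow> real^'n^'n) \<Rightarrow> real^'n^('n+'n)" where
  "blkcol2 F = (\<chi> r c. F (fst (bidx2 r)) $ snd (bidx2 r) $ c)"

definition blkrow2 :: "(nat \<Rightarrow> real^'n^'n) \<Rightarrow> real^('n+'n)^'n" where
  "blkrow2 F = (\<chi> r c. F (fst (bidx2 c)) $ r $ snd (bidx2 c))"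

definition blk3 :: "(nat \<Rightarrow> nat \<Rightarrow> real^'n^'n) \<Rightarrow> real^(('n+'n)+'n)^(('n+'n)+'n)" where
  "blk3 F = (\<chi> r c. F (fst (bidx3 r)) (fst (bidx3 c)) $ snd (bidx3 r) $ snd (bidx3 c))"

definition blkcol3 :: "(nat \<Rightarrow> real^'n^'n) \<Rightarrow> real^'n^(('n+'n)+'n)" where
  "blkcol3 F = (\<chi> r c. F (fst (bidx3 r)) $ snd (bidx3 r) $ c)"

definition blkrow3 :: "(nat \<Rightarrow> real^'n^'n) \<Rightarrow> real^(('n+'n)+'n)^'n" where
  "blkrow3 F = (\<chi> r c. F (fst (bidx3 c)) $ r $ snd (bidx3 c))"

text \<open>H_std: state (theta, omega).\<close>

definition A_std :: "real \<Rightarrow> real \<Rightarrow> real^'n^'n \<Rightarrow> real^('n+'n)^('n+'n)" where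
  "A_std m \<tau> LB = blk2 (\<lambda>p q.
     if p = 0 \<and> q = 1 then mat 1
     else if p = 1 \<and> q = 0 then - ((m / \<tau>) *\<^sub>R LB)
     else if p = 1 \<and> q = 1 then - ((1 / \<tau>) *\<^sub>R mat 1)
     else 0)"

definition B_std :: "real \<Rightarrow> real^'n^('n+'n)" where
  "B_std \<tau> = blkcol2 (\<lambda>p. if p = 1 then (1 / \<tau>) *\<^sub>R mat 1 else 0)"

definition C_std :: "real^'n^'n \<Rightarrow> real^('n+'n)^'n" where
  "C_std LG = blkrow2 (\<lambda>p. if p = 0 then psd_sqrt LG else 0)"

text \<open>H_DAPI: state (theta, omega, Omega).\<close>

definition A_dapi :: "real \<Rightarrow> real \<Rightarrow> real \<Rightarrow> real^'n^'n \<Rightarrow> real^'n^'n \<Rightarrow> real^(('n+'n)+'n)^(('n+'n)+'n)" where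
  "A_dapi m \<tau> k LB LC = blk3 (\<lambda>p q.
     if p = 0 \<and> q = 1 then mat 1
     else if p = 1 \<and> q = 0 then - ((m / \<tau>) *\<^sub>R LB)
     else if p = 1 \<and> q = 1 then - ((1 / \<tau>) *\<^sub>R mat 1)
     else if p = 1 \<and> q = 2 then (1 / \<tau>) *\<^sub>R mat 1
     else if p = 2 \<and> q = 1 then - ((1 / k) *\<^sub>R mat 1)
     else if p = 2 \<and> q = 2 then - ((1 / k) *\<^sub>R LC)
     else 0)"

definition B_dapi :: "real \<Rightarrow> real^'n^(('n+'n)+'n)" where
  "B_dapi \<tau> = blkcol3 (\<lambda>p. if p = 1 then (1 / \<tau>) *\<^sub>R mat 1 else 0)"

definition C_dapi :: "real^'n^'n \<Rightarrow> real^(('n+'n)+'n)^'n" where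
  "C_dapi LG = blkrow3 (\<lambda>p. if p = 0 then psd_sqrt LG else 0)"

end

theory Submission
  imports Defs "HOL-Real_Asymp.Real_Asymp"
begin

text \<open>
  Diagonalise \<open>L\<^sub>B\<close> in an orthonormal eigenbasis. Both state matrices commute with the
  projection onto an eigenvector \<open>v\<close> taken in every block, so the impulse response to the
  input \<open>v\<close> stays in the \<open>v\<close>-mode and its coordinates solve a scalar linear ODE of order two
  (\<open>H\<^sub>s\<^sub>t\<^sub>d\<close>) or three (\<open>H\<^sub>D\<^sub>A\<^sub>P\<^sub>I\<close>) whose coefficients involve the eigenvalue \<open>\<lambda>\<close>.
  The squared \<open>H\<^sub>2\<close> norm is the sum over the eigenbasis of \<open>\<integral>\<^sub>0\<^sup>\<infinity> |y|\<^sup>2\<close>, and each integral is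
  the initial value of a quadratic Lyapunov function \<open>W\<close> with \<open>W' = -|y|\<^sup>2\<close> and \<open>W \<rightarrow> 0\<close>.
  Every mode with \<open>\<lambda> > 0\<close> contributes \<open>\<alpha>/(2m)\<close> to \<open>\<parallel>H\<^sub>s\<^sub>t\<^sub>d\<parallel>\<^sub>2\<^sup>2\<close> and \<open>\<alpha>/(2m)\<close> times a factor
  strictly less than one to \<open>\<parallel>H\<^sub>D\<^sub>A\<^sub>P\<^sub>I\<parallel>\<^sub>2\<^sup>2\<close>; connectivity of the graph guarantees such a mode.
\<close>

section \<open>The matrix exponential\<close>

lemma matpow_entry_bound:
  fixes A :: "real^'n^'n"
  shows "\<bar>matpow A k $ i $ j\<bar> \<le> (1 + (\<Sum>i\<in>UNIV. \<Sum>j\<in>UNIV. \<bar>A$i$j\<bar>)) ^ k"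
proof (induction k arbitrary: i j)
  case 0
  then show ?case by (simp add: mat_def)
next
  case (Suc k)
  define R where "R = 1 + (\<Sum>i\<in>UNIV. \<Sum>j\<in>UNIV. \<bar>A$i$j\<bar>)"
  have R0: "0 \<le> R" unfolding R_def by (simp add: sum_nonneg)
  have row: "(\<Sum>l\<in>UNIV. \<bar>A$i$l\<bar>) \<le> R"
  proof -
    have "(\<Sum>l\<in>UNIV. \<bar>A$i$l\<bar>) \<le> (\<Sum>i\<in>UNIV. \<Sum>j\<in>UNIV. \<bar>A$i$j\<bar>)"
      by (rule member_le_sum[where f="\<lambda>i. \<Sum>j\<in>UNIV. \<bar>A$i$j\<bar>"]) (auto simp: sum_nonneg)
    then show ?thesis unfolding R_def by simp
  qed
  have "\<bar>matpow A (Suc k) $ i $ j\<bar> = \<bar>\<Sum>l\<in>UNIV. A$i$l * matpow A k $ l $ j\<bar>"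
    by (simp add: matrix_matrix_mult_def)
  also have "\<dots> \<le> (\<Sum>l\<in>UNIV. \<bar>A$i$l\<bar> * R^k)"
    using Suc.IH unfolding R_def
    by (intro order_trans[OF sum_abs] sum_mono) (simp add: abs_mult mult_left_mono)
  also have "\<dots> \<le> R * R^k"
    using row R0 by (simp add: sum_distrib_right[symmetric] mult_right_mono)
  finally show ?case unfolding R_def by simp
qed

lemma matpow_scaleR: "matpow (t *\<^sub>R (A::real^'n^'n)) k = t^k *\<^sub>R matpow A k"
  by (induction k) (simp_all add: matrix_scalar_ac scalar_matrix_assoc[symmetric])

lemma summable_mexp_entry:
  fixes A :: "real^'n^'n"
  shows "summable (\<lambda>k. (matpow A k $ i $ j / fact k) * t^k)"
proof -
  define R where "R = 1 + (\<Sum>i\<in>UNIV. \<Sum>j\<in>UNIV. \<bar>A$i$j\<bar>)"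
  show ?thesis
  proof (rule summable_comparison_test'[OF summable_exp[of "R * \<bar>t\<bar>"]])
    fix k :: nat
    have "norm (matpow A k $ i $ j / fact k * t^k) = \<bar>matpow A k $ i $ j\<bar> * \<bar>t\<bar>^k / fact k"
      by (simp add: abs_mult power_abs)
    also have "\<dots> \<le> R^k * \<bar>t\<bar>^k / fact k"
      using matpow_entry_bound[of A k i j] unfolding R_def
      by (intro divide_right_mono mult_right_mono) auto
    also have "\<dots> = inverse (fact k) * (R * \<bar>t\<bar>)^k"
      by (simp add: power_mult_distrib field_simps)
    finally show "norm (matpow A k $ i $ j / fact k * t^k) \<le> inverse (fact k) * (R * \<bar>t\<bar>)^k" .
  qed
qed

lemma mexp_scaleR_entry:
  "mexp (t *\<^sub>R (A::real^'n^'n)) $ i $ j = (\<Sum>k. (matpow A k $ i $ j / fact k) * t^k)"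
  by (simp add: mexp_def matpow_scaleR mult.commute)

lemma mexp_0 [simp]: "mexp (0::real^'n^'n) = mat 1"
proof -
  have "mexp (0 *\<^sub>R (0::real^'n^'n)) $ i $ j = mat 1 $ i $ j" for i j
    unfolding mexp_scaleR_entry using powser_zero[of "\<lambda>k. matpow 0 k $ i $ j / fact k"] by simp
  then show ?thesis by (simp add: vec_eq_iff)
qed

lemma sum_mult_suminf:
  fixes f :: "'a \<Rightarrow> nat \<Rightarrow> real"
  assumes "\<And>l. summable (f l)" "finite S"
  shows "(\<Sum>l\<in>S. c l * (\<Sum>k. f l k)) = (\<Sum>k. \<Sum>l\<in>S. c l * f l k)"
proof -
  have "(\<Sum>l\<in>S. c l * (\<Sum>k. f l k)) = (\<Sum>l\<in>S. (\<Sum>k. c l * f l k))"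
    using assms by (simp add: suminf_mult)
  also have "\<dots> = (\<Sum>k. \<Sum>l\<in>S. c l * f l k)"
    by (rule suminf_sum[symmetric]) (use assms in \<open>auto intro: summable_mult\<close>)
  finally show ?thesis .
qed

lemma has_real_derivative_mexp_entry:
  fixes A :: "real^'n^'n"
  shows "((\<lambda>t. mexp (t *\<^sub>R A) $ i $ j) has_real_derivative (A ** mexp (t *\<^sub>R A)) $ i $ j) (at t)"
proof -
  define c where "c = (\<lambda>k. matpow A k $ i $ j / fact k)"
  have d: "((\<lambda>t. \<Sum>k. c k * t^k) has_real_derivative (\<Sum>k. diffs c k * t^k)) (at t)"
    unfolding c_def by (rule termdiffs_strong_converges_everywhere, rule summable_mexp_entry)
  have "diffs c k = matpow A (Suc k) $ i $ j / fact k" for k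
  proof -
    have "real (Suc k) * (x / fact (Suc k)) = x / fact k" for x :: real
      by (simp add: fact_Suc del: of_nat_Suc)
    then show ?thesis by (simp add: diffs_def c_def del: matpow.simps of_nat_Suc)
  qed
  then have "(\<Sum>k. diffs c k * t^k) = (\<Sum>k. \<Sum>l\<in>UNIV. A$i$l * (matpow A k $ l $ j / fact k * t^k))"
    by (simp add: matrix_matrix_mult_def sum_distrib_right sum_divide_distrib mult.assoc)
  also have "\<dots> = (\<Sum>l\<in>UNIV. A$i$l * (\<Sum>k. matpow A k $ l $ j / fact k * t^k))"
    by (rule sum_mult_suminf[symmetric], rule summable_mexp_entry, simp)
  also have "\<dots> = (A ** mexp (t *\<^sub>R A)) $ i $ j"
    by (simp add: matrix_matrix_mult_def mexp_scaleR_entry)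
  finally show ?thesis using d by (simp add: c_def mexp_scaleR_entry)
qed

lemma has_real_derivative_mexp_mv:
  fixes A :: "real^'n^'n"
  shows "((\<lambda>t. (mexp (t *\<^sub>R A) *v y) $ r) has_real_derivative (A *v (mexp (t *\<^sub>R A) *v y)) $ r) (at t)"
proof -
  have "((\<lambda>t. \<Sum>c\<in>UNIV. mexp (t *\<^sub>R A) $ r $ c * y $ c) has_real_derivative
          (\<Sum>c\<in>UNIV. (A ** mexp (t *\<^sub>R A)) $ r $ c * y $ c)) (at t)"
    by (intro DERIV_sum DERIV_cmult_right has_real_derivative_mexp_entry)
  moreover have "(A *v (mexp (t *\<^sub>R A) *v y)) $ r = (\<Sum>c\<in>UNIV. (A ** mexp (t *\<^sub>R A)) $ r $ c * y $ c)"
    by (simp add: matrix_vector_mul_assoc, simp add: matrix_vector_mult_def)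
  ultimately show ?thesis by (simp add: matrix_vector_mult_def)
qed

lemma continuous_on_mexp_mv: "continuous_on UNIV (\<lambda>t. mexp (t *\<^sub>R (A::real^'n^'n)) *v y)"
proof -
  have "continuous_on UNIV (\<lambda>t. \<chi> r. (mexp (t *\<^sub>R A) *v y) $ r)"
    by (intro continuous_on_vec_lambda continuous_at_imp_continuous_on ballI
        DERIV_isCont[OF has_real_derivative_mexp_mv])
  then show ?thesis by simp
qed

lemma matpow_commute:
  fixes A P :: "real^'n^'n"
  assumes "P ** A = A ** P"
  shows "P ** matpow A k = matpow A k ** P"
proof (induction k)
  case 0 then show ?case by simp
next
  case (Suc k)
  have "P ** matpow A (Suc k) = A ** (P ** matpow A k)"
    using assms by (simp add: matrix_mul_assoc)
  then show ?case using Suc by (simp add: matrix_mul_assoc)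
qed

lemma mexp_commute:
  fixes A P :: "real^'n^'n"
  assumes "P ** A = A ** P"
  shows "P ** mexp (t *\<^sub>R A) = mexp (t *\<^sub>R A) ** P"
proof -
  have "(P ** mexp (t *\<^sub>R A)) $ i $ j = (mexp (t *\<^sub>R A) ** P) $ i $ j" for i j
  proof -
    have "(P ** mexp (t *\<^sub>R A)) $ i $ j = (\<Sum>l\<in>UNIV. P$i$l * (\<Sum>k. matpow A k $ l $ j / fact k * t^k))"
      by (simp add: matrix_matrix_mult_def mexp_scaleR_entry)
    also have "\<dots> = (\<Sum>k. \<Sum>l\<in>UNIV. P$i$l * (matpow A k $ l $ j / fact k * t^k))"
      by (rule sum_mult_suminf, rule summable_mexp_entry, simp)
    also have "\<dots> = (\<Sum>k. (P ** matpow A k) $ i $ j / fact k * t^k)"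
      by (simp add: matrix_matrix_mult_def sum_distrib_right sum_divide_distrib mult.assoc)
    also have "\<dots> = (\<Sum>k. (matpow A k ** P) $ i $ j / fact k * t^k)"
      by (simp add: matpow_commute[OF assms])
    also have "\<dots> = (\<Sum>k. \<Sum>l\<in>UNIV. P$l$j * (matpow A k $ i $ l / fact k * t^k))"
      by (rule suminf_cong) (simp add: matrix_matrix_mult_def sum_distrib_right sum_distrib_left
          sum_divide_distrib mult_ac)
    also have "\<dots> = (\<Sum>l\<in>UNIV. P$l$j * (\<Sum>k. matpow A k $ i $ l / fact k * t^k))"
      by (rule sum_mult_suminf[symmetric], rule summable_mexp_entry, simp)
    also have "\<dots> = (mexp (t *\<^sub>R A) ** P) $ i $ j"
      by (simp add: matrix_matrix_mult_def mexp_scaleR_entry mult.commute)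
    finally show ?thesis .
  qed
  then show ?thesis by (simp add: vec_eq_iff)
qed

lemma mexp_mv_fixed:
  fixes A P :: "real^'n^'n"
  assumes "P ** A = A ** P" and "P *v y = y"
  shows "P *v (mexp (t *\<^sub>R A) *v y) = mexp (t *\<^sub>R A) *v y"
proof -
  have "P *v (mexp (t *\<^sub>R A) *v y) = mexp (t *\<^sub>R A) *v (P *v y)"
    by (simp add: matrix_vector_mul_assoc mexp_commute[OF assms(1)])
  then show ?thesis using assms(2) by simp
qed

lemma matpow_transpose: "matpow (transpose (A::real^'n^'n)) k = transpose (matpow A k)"
proof (induction k)
  case 0 then show ?case by simp
next
  case (Suc k)
  then show ?case
    using matpow_commute[of A A k] by (simp add: matrix_transpose_mul)
qed

lemma mexp_transpose: "mexp (t *\<^sub>R transpose (A::real^'n^'n)) = transpose (mexp (t *\<^sub>R A))"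
  by (simp add: vec_eq_iff mexp_scaleR_entry matpow_transpose, simp add: transpose_def mexp_scaleR_entry)

section \<open>Symmetric matrices\<close>

lemma symmetric_matrix_inner:
  fixes M :: "real^'n^'n"
  assumes "transpose M = M"
  shows "(M *v x) \<bullet> y = x \<bullet> (M *v y)"
proof -
  have "M *v x = x v* M" using assms transpose_matrix_vector[of M x] by simp
  then show ?thesis by (simp add: dot_lmul_matrix)
qed

lemma symmetric_quadratic_form_add_scaleR:
  fixes M :: "real^'n^'n"
  assumes "transpose M = M"
  shows "(x + t *\<^sub>R y) \<bullet> (M *v (x + t *\<^sub>R y))
    = x \<bullet> (M *v x) + 2*t*(y \<bullet> (M *v x)) + t^2 * (y \<bullet> (M *v y))"
proof -
  have "x \<bullet> (M *v y) = y \<bullet> (M *v x)"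
    using symmetric_matrix_inner[OF assms, of y x] by (simp add: inner_commute)
  then show ?thesis
    by (simp add: matrix_vector_right_distrib matrix_vector_mult_scaleR inner_add_left
        inner_add_right algebra_simps power2_eq_square)
qed

lemma quadratic_nonpos_imp_linear_coeff_zero:
  fixes c d :: real
  assumes "\<And>t. 2*t*c + t^2*d \<le> 0"
  shows "c = 0"
proof (rule ccontr)
  assume c: "c \<noteq> 0"
  define w where "w = \<bar>d\<bar> + 1"
  have w: "w > 0" "2*w + d > 0" unfolding w_def by (simp_all add: abs_if)
  have "2*(c/w)*c + (c/w)^2*d = c^2 * (2*w + d) / w^2"
    using w by (simp add: field_simps power2_eq_square)
  also have "\<dots> > 0" using c w by simp
  finally show False using assms[of "c/w"] by linarith
qed

lemma symmetric_rayleigh_max_imp_eigenvector: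
  fixes M :: "real^'n^'n"
  assumes sym: "transpose M = M" and V: "subspace V" and inv: "\<And>x. x \<in> V \<Longrightarrow> M *v x \<in> V"
    and x: "x \<in> V" "norm x = 1"
    and max: "\<And>w. w \<in> V \<Longrightarrow> w \<bullet> (M *v w) \<le> (x \<bullet> (M *v x)) * (w \<bullet> w)"
  shows "M *v x = (x \<bullet> (M *v x)) *\<^sub>R x"
proof -
  define \<mu> where "\<mu> = x \<bullet> (M *v x)"
  define r where "r = M *v x - \<mu> *\<^sub>R x"
  have xx: "x \<bullet> x = 1" using x(2) by (simp add: norm_eq_1)
  have orth: "y \<bullet> r = 0" if y: "y \<in> V" for y
  proof (rule quadratic_nonpos_imp_linear_coeff_zero)
    fix t :: real
    have "x + t *\<^sub>R y \<in> V" using x(1) y V by (simp add: subspace_add subspace_scale)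
    from max[OF this] have
      "\<mu> + 2*t*(y \<bullet> (M *v x)) + t^2 * (y \<bullet> (M *v y)) \<le> \<mu> * (1 + 2*t*(x \<bullet> y) + t^2*(y \<bullet> y))"
      unfolding symmetric_quadratic_form_add_scaleR[OF sym] \<mu>_def[symmetric]
      using xx inner_commute[of y x]
      by (simp add: inner_add_left inner_add_right power2_eq_square algebra_simps)
    moreover have "y \<bullet> (M *v x) = y \<bullet> r + \<mu> * (x \<bullet> y)"
      unfolding r_def by (simp add: inner_diff_right inner_commute)
    ultimately show "2*t*(y \<bullet> r) + t^2*(y \<bullet> (M *v y) - \<mu> * (y \<bullet> y)) \<le> 0"
      by (simp add: algebra_simps)
  qed
  have "r \<in> V" unfolding r_def using inv[OF x(1)] x(1) V by (simp add: subspace_diff subspace_scale)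
  then have "r = 0" using orth[of r] by simp
  then show ?thesis unfolding r_def \<mu>_def by simp
qed

lemma symmetric_eigenvector_exists:
  fixes M :: "real^'n^'n"
  assumes sym: "transpose M = M" and V: "subspace V" "V \<noteq> {0}"
    and inv: "\<And>x. x \<in> V \<Longrightarrow> M *v x \<in> V"
  obtains x \<mu> where "x \<in> V" "norm x = 1" "M *v x = \<mu> *\<^sub>R x"
proof -
  define K where "K = sphere 0 1 \<inter> V"
  have "compact K" unfolding K_def
    by (intro compact_Int_closed[OF compact_sphere] closed_subspace V)
  obtain z where z: "z \<in> V" "z \<noteq> 0" using V subspace_0[OF V(1)] by blast
  have "z /\<^sub>R norm z \<in> K" unfolding K_def using z V by (auto simp: subspace_scale)
  then have "K \<noteq> {}" by auto
  moreover have "continuous_on K (\<lambda>x. x \<bullet> (M *v x))" by (intro continuous_intros)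
  ultimately obtain x where x: "x \<in> K" and xmax: "\<And>y. y \<in> K \<Longrightarrow> y \<bullet> (M *v y) \<le> x \<bullet> (M *v x)"
    using continuous_attains_sup[OF \<open>compact K\<close>] by metis
  have "w \<bullet> (M *v w) \<le> (x \<bullet> (M *v x)) * (w \<bullet> w)" if w: "w \<in> V" for w
  proof (cases "w = 0")
    case False
    have "w /\<^sub>R norm w \<in> K" unfolding K_def using w False V by (auto simp: subspace_scale)
    from xmax[OF this] have "(w \<bullet> (M *v w)) / (norm w)^2 \<le> x \<bullet> (M *v x)"
      by (simp add: matrix_vector_mult_scaleR power2_eq_square field_simps)
    then show ?thesis using False by (simp add: divide_le_eq power2_norm_eq_inner mult.commute)
  qed simp
  moreover have "x \<in> V" "norm x = 1" using x unfolding K_def by auto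
  ultimately show ?thesis using symmetric_rayleigh_max_imp_eigenvector[OF sym V(1) inv] that
    by blast
qed

definition onb :: "(real^'n) set \<Rightarrow> bool" where
  "onb Bs \<longleftrightarrow> finite Bs \<and> pairwise orthogonal Bs \<and> (\<forall>v\<in>Bs. norm v = 1) \<and> span Bs = UNIV"

lemma subspace_subset_span_insert_unit:
  assumes V: "subspace V" and x: "x \<in> V" "norm x = 1"
    and B: "V \<inter> {y. orthogonal x y} \<subseteq> span B"
  shows "V \<subseteq> span (insert x B)"
proof
  fix z assume z: "z \<in> V"
  have "z - (x \<bullet> z) *\<^sub>R x \<in> V \<inter> {y. orthogonal x y}"
    unfolding orthogonal_def using z x V
    by (auto simp: subspace_diff subspace_scale inner_diff_right norm_eq_1)
  then have "z - (x \<bullet> z) *\<^sub>R x \<in> span (insert x B)"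
    using B span_mono[of B "insert x B"] by auto
  moreover have "(x \<bullet> z) *\<^sub>R x \<in> span (insert x B)"
    by (simp add: span_base span_mul)
  ultimately show "z \<in> span (insert x B)" using span_add by fastforce
qed

lemma symmetric_invariant_subspace_eigenbasis:
  fixes M :: "real^'n^'n"
  assumes sym: "transpose M = M"
  shows "subspace V \<Longrightarrow> (\<forall>x\<in>V. M *v x \<in> V) \<Longrightarrow> dim V \<le> n \<Longrightarrow>
    \<exists>Bs. finite Bs \<and> Bs \<subseteq> V \<and> pairwise orthogonal Bs
      \<and> (\<forall>v\<in>Bs. norm v = 1 \<and> (\<exists>\<mu>. M *v v = \<mu> *\<^sub>R v)) \<and> V \<subseteq> span Bs"
proof (induction n arbitrary: V)
  case 0
  then have "V \<subseteq> {0}" by simp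
  then show ?case by (intro exI[of _ "{}"]) auto
next
  case (Suc n)
  show ?case
  proof (cases "V \<subseteq> {0}")
    case True
    then show ?thesis by (intro exI[of _ "{}"]) auto
  next
    case False
    then obtain x \<mu> where x: "x \<in> V" "norm x = 1" "M *v x = \<mu> *\<^sub>R x"
      using symmetric_eigenvector_exists[OF sym Suc.prems(1)] Suc.prems(2) by blast
    define V' where "V' = V \<inter> {y. orthogonal x y}"
    have sV': "subspace V'" unfolding V'_def
      using subspace_Int[of "{V, {y. orthogonal x y}}" id] Suc.prems(1)
        subspace_orthogonal_to_vector[of x]
      by auto
    have invV': "\<forall>y\<in>V'. M *v y \<in> V'"
    proof
      fix y assume y: "y \<in> V'"
      have "x \<bullet> (M *v y) = \<mu> * (x \<bullet> y)"
        using symmetric_matrix_inner[OF sym, of x y] x(3) by simp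
      then show "M *v y \<in> V'" using y Suc.prems(2) unfolding V'_def orthogonal_def by auto
    qed
    have "x \<notin> V'" using x(2) unfolding V'_def orthogonal_def by (auto simp: norm_eq_1)
    then have "V' \<subset> V" using x(1) unfolding V'_def by auto
    then have "span V' \<subset> span V" using sV' Suc.prems(1) by (metis span_eq_iff)
    then have "dim V' \<le> n" using dim_psubset[of V' V] Suc.prems(3) by simp
    from Suc.IH[OF sV' invV' this] obtain Bs where Bs: "finite Bs" "Bs \<subseteq> V'"
      "pairwise orthogonal Bs" "\<forall>v\<in>Bs. norm v = 1 \<and> (\<exists>\<mu>. M *v v = \<mu> *\<^sub>R v)" "V' \<subseteq> span Bs"
      by blast
    show ?thesis
    proof (intro exI[of _ "insert x Bs"] conjI)
      show "finite (insert x Bs)" "\<forall>v\<in>insert x Bs. norm v = 1 \<and> (\<exists>\<mu>. M *v v = \<mu> *\<^sub>R v)"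
        using Bs x by auto
      show "insert x Bs \<subseteq> V" "pairwise orthogonal (insert x Bs)"
        using Bs x unfolding V'_def by (auto simp: pairwise_insert orthogonal_commute)
      show "V \<subseteq> span (insert x Bs)"
        using subspace_subset_span_insert_unit[OF Suc.prems(1) x(1,2)] Bs(5) unfolding V'_def .
    qed
  qed
qed

lemma symmetric_eigenbasis:
  fixes M :: "real^'n^'n"
  assumes "transpose M = M"
  obtains Bs lam where "onb Bs" "\<And>v. v \<in> Bs \<Longrightarrow> M *v v = lam v *\<^sub>R v"
proof -
  obtain Bs where Bs: "finite Bs" "pairwise orthogonal Bs"
    "\<forall>v\<in>Bs. norm v = 1 \<and> (\<exists>\<mu>. M *v v = \<mu> *\<^sub>R v)" "UNIV \<subseteq> span Bs"
    using symmetric_invariant_subspace_eigenbasis[OF assms, of UNIV "dim (UNIV::(real^'n) set)"]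
    by auto
  then have "onb Bs" unfolding onb_def by auto
  moreover from Bs(3) obtain lam where "\<And>v. v \<in> Bs \<Longrightarrow> M *v v = lam v *\<^sub>R v" by metis
  ultimately show ?thesis using that by blast
qed

lemma onb_expand:
  assumes "onb Bs"
  shows "(\<Sum>v\<in>Bs. (x \<bullet> v) *\<^sub>R v) = x"
  using assms unfolding onb_def by (intro orthonormal_basis_expand) auto

lemma onb_parseval:
  assumes "onb Bs"
  shows "x \<bullet> x = (\<Sum>v\<in>Bs. (x \<bullet> v)^2)"
proof -
  have "x \<bullet> x = x \<bullet> (\<Sum>v\<in>Bs. (x \<bullet> v) *\<^sub>R v)" using onb_expand[OF assms] by simp
  then show ?thesis by (simp add: inner_sum_right power2_eq_square)
qed

lemma matrix_vector_mult_sum: "(A::real^'n^'m) *v (\<Sum>v\<in>S. f v) = (\<Sum>v\<in>S. A *v f v)"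
  by (simp add: vec_eq_iff matrix_vector_mult_def sum_component sum_distrib_left sum.swap[of _ UNIV S])

lemma sum_matrix_vector_mult: "(\<Sum>v\<in>S. A v) *v (x::real^'n) = (\<Sum>v\<in>S. (A v :: real^'n^'m) *v x)"
  by (simp add: vec_eq_iff matrix_vector_mult_def sum_component sum_distrib_right sum.swap[of _ UNIV S])

lemma onb_matrix_eq_0:
  fixes A :: "real^'n^'m"
  assumes "onb Bs" "\<And>v. v \<in> Bs \<Longrightarrow> A *v v = 0"
  shows "A = 0"
proof -
  have "A *v x = 0 *v x" for x
  proof -
    have "A *v x = (\<Sum>v\<in>Bs. (x \<bullet> v) *\<^sub>R (A *v v))"
      by (subst onb_expand[OF assms(1), symmetric]) (simp add: matrix_vector_mult_sum matrix_vector_mult_scaleR)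
    then show ?thesis using assms(2) by simp
  qed
  then show ?thesis by (simp add: matrix_eq)
qed

lemma onb_sum_inner_scaleR:
  assumes "onb Bs" "u \<in> Bs"
  shows "(\<Sum>v\<in>Bs. (c v * (v \<bullet> u)) *\<^sub>R v) = c u *\<^sub>R u"
proof -
  have "v \<bullet> u = (if v = u then 1 else 0)" if "v \<in> Bs" for v
    using assms that unfolding onb_def pairwise_def orthogonal_def by (auto simp: norm_eq_1)
  then have "(\<Sum>v\<in>Bs. (c v * (v \<bullet> u)) *\<^sub>R v) = (\<Sum>v\<in>Bs. if v = u then c u *\<^sub>R u else 0)"
    by (intro sum.cong) auto
  then show ?thesis using assms unfolding onb_def by (simp add: sum.delta)
qed

section \<open>Positive semidefinite square roots\<close>

lemma psd_quadratic_form_eq_0_imp: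
  fixes S :: "real^'n^'n"
  assumes "psd S" "x \<bullet> (S *v x) = 0"
  shows "S *v x = 0"
proof -
  have sym: "transpose S = S" and nn: "\<And>z. 0 \<le> z \<bullet> (S *v z)" using assms(1) unfolding psd_def by auto
  have "2*t*(-(y \<bullet> (S *v x))) + t^2*(-(y \<bullet> (S *v y))) \<le> 0" for y t
    using nn[of "x + t *\<^sub>R y"] unfolding symmetric_quadratic_form_add_scaleR[OF sym] assms(2) by simp
  then have "- ((S *v x) \<bullet> (S *v x)) = 0" by (rule quadratic_nonpos_imp_linear_coeff_zero)
  then show ?thesis by simp
qed

text \<open>
  For an eigenvector \<open>w\<close> of \<open>S - T\<close> with eigenvalue \<open>\<delta>\<close>, the identity \<open>S\<^sup>2 = T\<^sup>2\<close> gives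
  \<open>\<delta> (w\<cdot>Sw + w\<cdot>Tw) = 0\<close>, and both quadratic forms are nonnegative.
\<close>

lemma psd_square_eq_imp_eq:
  fixes S T :: "real^'n^'n"
  assumes S: "psd S" and T: "psd T" and eq: "S ** S = T ** T"
  shows "S = T"
proof -
  have sS: "transpose S = S" and nS: "\<And>z. 0 \<le> z \<bullet> (S *v z)" using S unfolding psd_def by auto
  have sT: "transpose T = T" and nT: "\<And>z. 0 \<le> z \<bullet> (T *v z)" using T unfolding psd_def by auto
  define D where "D = S - T"
  have "transpose D = D" unfolding D_def using sS sT by (simp add: vec_eq_iff transpose_def)
  then obtain Bs \<delta> where Bs: "onb Bs" and eig: "\<And>v. v \<in> Bs \<Longrightarrow> D *v v = \<delta> v *\<^sub>R v"
    using symmetric_eigenbasis by blast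
  have "D *v w = 0" if w: "w \<in> Bs" for w
  proof -
    have SS: "S *v (S *v w) = T *v (T *v w)" using eq by (simp add: matrix_vector_mul_assoc)
    have "w \<bullet> (S *v (D *v w)) + (D *v w) \<bullet> (T *v w)
        = w \<bullet> (S *v (S *v w)) - w \<bullet> (S *v (T *v w)) + (S *v w) \<bullet> (T *v w) - (T *v w) \<bullet> (T *v w)"
      unfolding D_def
      by (simp add: matrix_vector_mult_diff_rdistrib matrix_vector_mult_diff_distrib inner_diff_left
          inner_diff_right)
    also have "\<dots> = 0"
      using SS symmetric_matrix_inner[OF sS, of w] symmetric_matrix_inner[OF sT, of w] by simp
    finally have "\<delta> w * (w \<bullet> (S *v w) + w \<bullet> (T *v w)) = 0"
      unfolding eig[OF w] by (simp add: matrix_vector_mult_scaleR algebra_simps)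
    then consider "\<delta> w = 0" | "w \<bullet> (S *v w) + w \<bullet> (T *v w) = 0" by auto
    then show ?thesis
    proof cases
      case 2
      then have "w \<bullet> (S *v w) = 0" "w \<bullet> (T *v w) = 0" using nS[of w] nT[of w] by linarith+
      then show ?thesis unfolding D_def
        by (simp add: psd_quadratic_form_eq_0_imp[OF S] psd_quadratic_form_eq_0_imp[OF T]
            matrix_vector_mult_diff_rdistrib)
    qed (simp add: eig[OF w])
  qed
  then have "D = 0" by (rule onb_matrix_eq_0[OF Bs])
  then show ?thesis unfolding D_def by simp
qed

definition outer :: "real^'n \<Rightarrow> real^'n^'n" where
  "outer v = (\<chi> i j. v$i * v$j)"

lemma outer_mv: "outer v *v x = (v \<bullet> x) *\<^sub>R v"
  by (simp add: vec_eq_iff outer_def matrix_vector_mult_def inner_vec_def sum_distrib_left mult_ac)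

lemma transpose_outer: "transpose (outer v) = outer v"
  by (simp add: vec_eq_iff outer_def transpose_def mult.commute)

lemma transpose_sum: "transpose (\<Sum>v\<in>S. A v) = (\<Sum>v\<in>S. transpose (A v :: real^'n^'m))"
  by (simp add: vec_eq_iff transpose_def sum_component)

lemma psd_sqrt_exists:
  fixes M :: "real^'n^'n"
  assumes sym: "transpose M = M" and nn: "\<And>x. 0 \<le> x \<bullet> (M *v x)"
  obtains S where "psd S" "S ** S = M"
proof -
  obtain Bs lam where Bs: "onb Bs" and eig: "\<And>v. v \<in> Bs \<Longrightarrow> M *v v = lam v *\<^sub>R v"
    using symmetric_eigenbasis[OF sym] by blast
  have lam: "lam v = v \<bullet> (M *v v)" if "v \<in> Bs" for v
    using Bs that eig[OF that] unfolding onb_def by (simp add: norm_eq_1)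
  define S where "S = (\<Sum>v\<in>Bs. sqrt (lam v) *\<^sub>R outer v)"
  have Sx: "S *v x = (\<Sum>v\<in>Bs. (sqrt (lam v) * (v \<bullet> x)) *\<^sub>R v)" for x
    unfolding S_def by (simp add: sum_matrix_vector_mult scaleR_matrix_vector_assoc[symmetric] outer_mv)
  have "transpose S = S"
    unfolding S_def by (simp add: transpose_sum transpose_scalar transpose_outer)
  moreover have "0 \<le> x \<bullet> (S *v x)" for x
  proof -
    have "x \<bullet> (S *v x) = (\<Sum>v\<in>Bs. sqrt (lam v) * (v \<bullet> x)^2)"
      unfolding Sx by (simp add: inner_sum_right power2_eq_square inner_commute mult_ac)
    also have "\<dots> \<ge> 0" using nn lam by (intro sum_nonneg mult_nonneg_nonneg) auto
    finally show ?thesis by simp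
  qed
  ultimately have "psd S" unfolding psd_def by simp
  moreover have "(S ** S - M) *v u = 0" if u: "u \<in> Bs" for u
  proof -
    have "S *v u = sqrt (lam u) *\<^sub>R u"
      unfolding Sx using onb_sum_inner_scaleR[OF Bs u, of "\<lambda>v. sqrt (lam v)"] by simp
    then have "S *v (S *v u) = (sqrt (lam u) * sqrt (lam u)) *\<^sub>R u"
      by (simp add: matrix_vector_mult_scaleR)
    also have "sqrt (lam u) * sqrt (lam u) = lam u" using nn[of u] lam[OF u] by simp
    finally show ?thesis
      using eig[OF u] by (simp add: matrix_vector_mult_diff_rdistrib matrix_vector_mul_assoc)
  qed
  then have "S ** S - M = 0" by (rule onb_matrix_eq_0[OF Bs])
  then have "S ** S = M" by simp
  ultimately show ?thesis using that by blast
qed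

lemma psd_sqrt:
  fixes M :: "real^'n^'n"
  assumes "transpose M = M" "\<And>x. 0 \<le> x \<bullet> (M *v x)"
  shows "psd (psd_sqrt M)" and "psd_sqrt M ** psd_sqrt M = M"
proof -
  obtain S where S: "psd S" "S ** S = M" using psd_sqrt_exists[OF assms] by blast
  have "psd_sqrt M = S" unfolding psd_sqrt_def
  proof (rule the_equality)
    show "\<And>T. psd T \<and> T ** T = M \<Longrightarrow> T = S" using S psd_square_eq_imp_eq by metis
  qed (use S in simp)
  then show "psd (psd_sqrt M)" "psd_sqrt M ** psd_sqrt M = M" using S by simp_all
qed

section \<open>Graph Laplacians\<close>

lemma laplacian_mv_component: "(laplacian b *v x) $ i = (\<Sum>j\<in>UNIV. b i j * (x$i - x$j))"
proof -
  have "(laplacian b *v x) $ i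
      = (\<Sum>j\<in>UNIV. (if i = j then (\<Sum>k\<in>UNIV - {i}. b i k) else - b i j) * x$j)"
    by (simp add: laplacian_def matrix_vector_mult_def)
  also have "\<dots> = (\<Sum>k\<in>UNIV - {i}. b i k) * x$i + (\<Sum>j\<in>UNIV - {i}. - b i j * x$j)"
    by (subst sum.remove[of UNIV i]) (auto intro!: sum.cong)
  also have "\<dots> = (\<Sum>j\<in>UNIV - {i}. b i j * (x$i - x$j))"
    by (simp add: sum_distrib_right sum_distrib_left sum.distrib[symmetric] algebra_simps sum_negf)
  also have "\<dots> = (\<Sum>j\<in>UNIV. b i j * (x$i - x$j))"
    using sum.remove[of UNIV i "\<lambda>j. b i j * (x$i - x$j)"] by simp
  finally show ?thesis .
qed

lemma transpose_laplacian:
  assumes "\<forall>i j. b i j = b j i"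
  shows "transpose (laplacian b) = laplacian b"
  using assms by (auto simp: vec_eq_iff transpose_def laplacian_def)

text \<open>The quadratic form of the Laplacian is \<open>\<frac>1 2 \<Sum>\<^sub>i\<^sub>j b\<^sub>i\<^sub>j (x\<^sub>i - x\<^sub>j)\<^sup>2\<close>.\<close>

lemma laplacian_quadratic_form_nonneg:
  fixes b :: "'n::finite \<Rightarrow> 'n \<Rightarrow> real"
  assumes sym: "\<forall>i j. b i j = b j i" and nn: "\<forall>i j. 0 \<le> b i j"
  shows "0 \<le> x \<bullet> (laplacian b *v x)"
proof -
  have q: "x \<bullet> (laplacian b *v x) = (\<Sum>i\<in>UNIV. \<Sum>j\<in>UNIV. b i j * (x$i * (x$i - x$j)))"
    by (simp add: inner_vec_def laplacian_mv_component sum_distrib_left mult_ac)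
  have q': "x \<bullet> (laplacian b *v x) = (\<Sum>i\<in>UNIV. \<Sum>j\<in>UNIV. b i j * (x$j * (x$j - x$i)))"
    unfolding q using sym by (subst sum.swap) simp
  have "2 * (x \<bullet> (laplacian b *v x)) = (\<Sum>i\<in>UNIV. \<Sum>j\<in>UNIV. b i j * (x$i - x$j)^2)"
    unfolding mult_2 by (subst (1) q, subst q') (simp add: sum.distrib[symmetric] power2_eq_square algebra_simps)
  also have "\<dots> \<ge> 0" using nn by (intro sum_nonneg mult_nonneg_nonneg) auto
  finally show ?thesis by simp
qed

lemma rtrancl_imp_edge:
  assumes "(i, j) \<in> r\<^sup>*" "i \<noteq> j"
  shows "\<exists>x y. x \<noteq> y \<and> (x, y) \<in> r"
  using assms
proof (induction rule: rtrancl_induct)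
  case (step y z)
  then show ?case by (cases "y = z") auto
qed simp

lemma laplacian_neq_0:
  fixes b :: "'n::finite \<Rightarrow> 'n \<Rightarrow> real"
  assumes "CARD('n) \<ge> 2" "connected_weights b"
  shows "laplacian b \<noteq> 0"
proof -
  obtain i j :: 'n where "i \<noteq> j"
  proof -
    have "\<not> (\<forall>i j :: 'n. i = j)"
    proof
      assume "\<forall>i j :: 'n. i = j"
      then have e: "(UNIV :: 'n set) = {undefined}" by auto
      have "CARD('n) = 1" unfolding e by simp
      then show False using assms(1) by simp
    qed
    then show ?thesis using that by blast
  qed
  then obtain x y where "x \<noteq> y" "b x y > 0"
    using rtrancl_imp_edge[of i j] assms(2) unfolding connected_weights_def by blast
  then have "laplacian b $ x $ y \<noteq> 0" by (simp add: laplacian_def)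
  then show ?thesis by auto
qed

section \<open>The \<open>H\<^sub>2\<close> norm as a sum of Lyapunov values\<close>

lemma trace_mult_transpose_self: "trace (M ** transpose M) = (\<Sum>i\<in>UNIV. (M$i) \<bullet> (M$i))"
  for M :: "real^'n^'m"
  by (simp add: trace_def matrix_matrix_mult_def transpose_def inner_vec_def)

lemma trace_h2_integrand_eq_sum:
  fixes A :: "real^'s^'s" and B :: "real^'u^'s" and C :: "real^'s^'y"
  assumes Bs: "onb Bs"
  shows "trace (C ** mexp (t *\<^sub>R A) ** B ** transpose B ** mexp (t *\<^sub>R transpose A) ** transpose C)
    = (\<Sum>v\<in>Bs. (norm (C *v (mexp (t *\<^sub>R A) *v (B *v v))))^2)"
proof -
  define M where "M = C ** mexp (t *\<^sub>R A) ** B"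
  have "C ** mexp (t *\<^sub>R A) ** B ** transpose B ** mexp (t *\<^sub>R transpose A) ** transpose C
      = M ** transpose M"
    unfolding M_def mexp_transpose by (simp add: matrix_transpose_mul matrix_mul_assoc)
  then have "trace (C ** mexp (t *\<^sub>R A) ** B ** transpose B ** mexp (t *\<^sub>R transpose A) ** transpose C)
      = (\<Sum>i\<in>UNIV. \<Sum>v\<in>Bs. ((M$i) \<bullet> v)^2)"
    by (simp add: trace_mult_transpose_self onb_parseval[OF Bs])
  also have "\<dots> = (\<Sum>v\<in>Bs. \<Sum>i\<in>UNIV. ((M *v v)$i)^2)"
    by (subst sum.swap) (simp add: matrix_vector_mul_component)
  also have "\<dots> = (\<Sum>v\<in>Bs. (M *v v) \<bullet> (M *v v))"
    by (simp add: inner_vec_def power2_eq_square)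
  also have "\<dots> = (\<Sum>v\<in>Bs. (norm (M *v v))^2)"
    by (simp only: power2_norm_eq_inner)
  finally show ?thesis
    unfolding M_def by (simp add: matrix_vector_mul_assoc matrix_mul_assoc)
qed

lemma dissipative_tendsto_zero:
  fixes V V' N :: "real \<Rightarrow> real"
  assumes d: "\<And>t. (V has_real_derivative V' t) (at t)"
    and diss: "\<And>t. V' t \<le> - \<mu> * N t" and bound: "\<And>t. V t \<le> K * N t"
    and "\<mu> > 0" "K > 0" and nn: "\<And>t. 0 \<le> V t"
  shows "(V \<longlongrightarrow> 0) at_top"
proof -
  define \<epsilon> where "\<epsilon> = \<mu> / K"
  have "\<epsilon> > 0" using assms unfolding \<epsilon>_def by simp
  have decay: "V' t \<le> - \<epsilon> * V t" for t
  proof -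
    have "V t / K \<le> N t" using bound[of t] \<open>K > 0\<close> by (simp add: divide_le_eq mult.commute)
    then have "\<mu> * (V t / K) \<le> \<mu> * N t" by (rule mult_left_mono) (use \<open>\<mu> > 0\<close> in simp)
    then show ?thesis using diss[of t] unfolding \<epsilon>_def by simp
  qed
  define h where "h t = exp (\<epsilon> * t) * V t" for t
  have dh: "(h has_real_derivative exp (\<epsilon> * t) * (\<epsilon> * V t + V' t)) (at t)" for t
    unfolding h_def by (auto intro!: derivative_eq_intros d simp: algebra_simps)
  have mono: "h t \<le> h 0" if "0 \<le> t" for t
  proof (rule DERIV_nonpos_imp_nonincreasing[OF that])
    fix x
    have "exp (\<epsilon> * x) * (\<epsilon> * V x + V' x) \<le> 0"
      using decay[of x] by (intro mult_nonneg_nonpos) auto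
    then show "\<exists>y. DERIV h x :> y \<and> y \<le> 0" using dh by blast
  qed
  have bound_exp: "V t \<le> V 0 * exp (- (\<epsilon> * t))" if "0 \<le> t" for t
  proof -
    have "exp (\<epsilon> * t) * V t \<le> V 0" using mono[OF that] unfolding h_def by simp
    then have "V t \<le> V 0 / exp (\<epsilon> * t)" by (simp add: le_divide_eq mult.commute)
    then show ?thesis by (simp add: exp_minus divide_inverse)
  qed
  have lim: "((\<lambda>t. V 0 * exp (- (\<epsilon> * t))) \<longlongrightarrow> 0) at_top"
    using \<open>\<epsilon> > 0\<close> by real_asymp
  show ?thesis
  proof (rule tendsto_sandwich[OF _ _ tendsto_const lim])
    show "\<forall>\<^sub>F t in at_top. 0 \<le> V t" using nn by simp
    show "\<forall>\<^sub>F t in at_top. V t \<le> V 0 * exp (- (\<epsilon> * t))"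
      using eventually_ge_at_top[of "0::real"] by (rule eventually_mono) (rule bound_exp)
  qed
qed

lemma set_integral_Ici_eq_initial_value:
  fixes f W :: "real \<Rightarrow> real"
  assumes dW: "\<And>t. (W has_real_derivative - f t) (at t)" and lim: "(W \<longlongrightarrow> 0) at_top"
    and cont: "\<And>t. isCont f t" and nn: "\<And>t. 0 \<le> f t"
  shows "(LINT t:{0..}|lborel. f t) = W 0"
proof -
  define F where "F t = - W t" for t
  have dF: "(F has_real_derivative f t) (at t)" for t
    unfolding F_def using DERIV_minus[OF dW[of t]] by simp
  have cF: "isCont F t" for t using DERIV_isCont[OF dF] .
  have "((F \<circ> real_of_ereal) \<longlongrightarrow> F 0) (at_right (ereal 0))"
    unfolding ereal_tendsto_simps1
    using cF[of 0] by (simp add: isCont_def tendsto_mono[OF at_within_le_at])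
  moreover have "((F \<circ> real_of_ereal) \<longlongrightarrow> 0) (at_left \<infinity>)"
    unfolding ereal_tendsto_simps1 F_def using tendsto_minus[OF lim] by simp
  ultimately have "interval_lebesgue_integral lborel (ereal 0) \<infinity> f = 0 - F 0"
    using nn by (intro interval_integral_FTC_nonneg(2)[OF _ dF cont]) auto
  moreover have "interval_lebesgue_integral lborel (ereal 0) \<infinity> f = (LINT t:{0<..}|lborel. f t)"
    using interval_lebesgue_integral_0_infty(2)[of lborel f] by (simp add: zero_ereal_def)
  moreover have "(LINT t:{0<..}|lborel. f t) = (LINT t:{0..}|lborel. f t)"
  proof (rule set_integral_cong_set)
    have "continuous_on UNIV f" using cont by (simp add: continuous_on_eq_continuous_at)
    then show "set_borel_measurable lborel {0..} f" "set_borel_measurable lborel {0<..} f"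
      unfolding set_borel_measurable_def
      using borel_measurable_continuous_on_indicator[of "{0..}" f]
        borel_measurable_continuous_on_indicator[of "{0<..}" f]
      by (auto intro: continuous_on_subset)
    show "AE t in lborel. ((t::real) \<in> {0..}) = (t \<in> {0<..})"
      using AE_lborel_singleton[of "0::real"] by (auto elim!: AE_mp)
  qed
  ultimately show ?thesis unfolding F_def by simp
qed

text \<open>\<open>W\<close> is the quadratic form of the observability Gramian, evaluated at \<open>B v\<close>.\<close>

lemma h2sq_eq_sum_Lyapunov:
  fixes A :: "real^'s^'s" and B :: "real^'u^'s" and C :: "real^'s^'y"
  assumes Bs: "onb Bs"
    and Lyapunov: "\<And>v. v \<in> Bs \<Longrightarrow> \<exists>W.
      (\<forall>t. (W has_real_derivative - ((norm (C *v (mexp (t *\<^sub>R A) *v (B *v v))))^2)) (at t))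
      \<and> (W \<longlongrightarrow> 0) at_top \<and> W 0 = c v"
  shows "h2sq A B C = (\<Sum>v\<in>Bs. c v)"
proof -
  obtain W where W: "\<And>v. v \<in> Bs \<Longrightarrow>
      (\<forall>t. (W v has_real_derivative - ((norm (C *v (mexp (t *\<^sub>R A) *v (B *v v))))^2)) (at t))
      \<and> (W v \<longlongrightarrow> 0) at_top \<and> W v 0 = c v"
    using Lyapunov by metis
  have fin: "finite Bs" using Bs unfolding onb_def by simp
  have "isCont (\<lambda>t. (norm (C *v (mexp (t *\<^sub>R A) *v (B *v v))))^2) t" for v t
  proof -
    have "isCont (\<lambda>t. mexp (t *\<^sub>R A) *v (B *v v)) t"
      using continuous_on_mexp_mv[of A "B *v v"] by (simp add: continuous_on_eq_continuous_at)
    from isCont_o2[OF this matrix_vector_mult_linear_continuous_at]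
    show ?thesis by (intro continuous_intros)
  qed
  then have "(LINT t:{0..}|lborel. (\<Sum>v\<in>Bs. (norm (C *v (mexp (t *\<^sub>R A) *v (B *v v))))^2))
      = (\<Sum>v\<in>Bs. W v 0)"
    using fin W
    by (intro set_integral_Ici_eq_initial_value[where W="\<lambda>t. \<Sum>v\<in>Bs. W v t"])
      (auto intro!: DERIV_sum tendsto_null_sum continuous_intros sum_nonneg simp: sum_negf[symmetric])
  also have "\<dots> = (\<Sum>v\<in>Bs. c v)" using W by simp
  finally show ?thesis unfolding h2sq_def trace_h2_integrand_eq_sum[OF Bs] .
qed

section \<open>Output energy of the scalar mode equations\<close>

lemma square_linear3_le: "(p*x + q*y + r*z)^2 \<le> (p^2 + q^2 + r^2) * (x^2 + y^2 + (z::real)^2)"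
proof -
  have "0 \<le> (p*y - q*x)^2 + (p*z - r*x)^2 + (q*z - r*y)^2" by simp
  then show ?thesis by (simp add: power2_eq_square algebra_simps)
qed

text \<open>
  \<open>P\<close> alone is not a strict Lyapunov function; the extra term \<open>E\<close> makes \<open>P + E\<close> one,
  which forces \<open>P \<rightarrow> 0\<close>.
\<close>

lemma Lyapunov_output_energy:
  fixes P E y :: "real \<Rightarrow> real"
  assumes dP: "\<And>t. (P has_real_derivative - \<kappa> * (y t)^2) (at t)" and "\<kappa> > 0"
    and P: "\<And>t. 0 \<le> P t" and E: "\<And>t. 0 \<le> E t" and lim: "((\<lambda>t. P t + E t) \<longlongrightarrow> 0) at_top"
  obtains W where "\<And>t. (W has_real_derivative - (q * (y t)^2)) (at t)" "(W \<longlongrightarrow> 0) at_top"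
    "W 0 = q / \<kappa> * P 0"
proof
  show "((\<lambda>t. q / \<kappa> * P t) has_real_derivative - (q * (y t)^2)) (at t)" for t
    using DERIV_cmult[OF dP, of "q / \<kappa>"] \<open>\<kappa> > 0\<close> by simp
  have "(P \<longlongrightarrow> 0) at_top"
    using P E by (intro tendsto_sandwich[OF _ _ tendsto_const lim]) (auto intro: add_increasing2)
  then show "((\<lambda>t. q / \<kappa> * P t) \<longlongrightarrow> 0) at_top" by (rule tendsto_mult_right_zero)
qed simp

lemma damped_oscillator_output_energy:
  fixes x1 x2 :: "real \<Rightarrow> real"
  assumes a: "a > 0" and c: "c > 0"
    and d1: "\<And>t. (x1 has_real_derivative x2 t) (at t)"
    and d2: "\<And>t. (x2 has_real_derivative - a * x1 t - c * x2 t) (at t)"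
    and init: "x1 0 = 0" "x2 0 = c"
  obtains W where "\<And>t. (W has_real_derivative - (q * (x1 t)^2)) (at t)" "(W \<longlongrightarrow> 0) at_top"
    "W 0 = q * c / (2 * a)"
proof -
  define P where "P t = a * (x1 t)^2 + (c * x1 t + x2 t)^2" for t
  define E where "E t = a * (x1 t)^2 + (x2 t)^2" for t
  define N where "N t = (x1 t)^2 + (x2 t)^2" for t
  have dP: "(P has_real_derivative - (2*a*c) * (x1 t)^2) (at t)" for t
    unfolding P_def[abs_def]
    by (rule derivative_eq_intros d1 d2 refl | simp add: power2_eq_square algebra_simps)+
  have dV: "((\<lambda>t. P t + E t) has_real_derivative - (2*a*c) * (x1 t)^2 - 2*c*(x2 t)^2) (at t)" for t
    unfolding P_def[abs_def] E_def[abs_def]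
    by (rule derivative_eq_intros d1 d2 refl | simp add: power2_eq_square algebra_simps)+
  have lim: "((\<lambda>t. P t + E t) \<longlongrightarrow> 0) at_top"
  proof (rule dissipative_tendsto_zero[OF dV])
    show "- (2*a*c) * (x1 t)^2 - 2*c*(x2 t)^2 \<le> - (2*c*min a 1) * N t" for t
    proof -
      have "min a 1 * (x1 t)^2 \<le> a * (x1 t)^2" "min a 1 * (x2 t)^2 \<le> 1 * (x2 t)^2"
        by (intro mult_right_mono; simp)+
      then have "2*c * (min a 1 * N t) \<le> 2*c * (a * (x1 t)^2 + (x2 t)^2)"
        unfolding N_def using c by (intro mult_left_mono) (auto simp: algebra_simps)
      then show ?thesis by (simp add: algebra_simps)
    qed
    show "P t + E t \<le> (2*a + c^2 + 2) * N t" for t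
    proof -
      have "(c * x1 t + x2 t)^2 \<le> (c^2 + 1) * N t"
        using square_linear3_le[of c "x1 t" 1 "x2 t" 0 0] unfolding N_def by simp
      moreover have "a * (x1 t)^2 \<le> a * N t" "(x2 t)^2 \<le> N t"
        unfolding N_def using a by simp_all
      ultimately show ?thesis unfolding P_def E_def by (simp add: algebra_simps)
    qed
    show "2*a + c^2 + 2 > 0" using a by (simp add: add_pos_nonneg)
  qed (use a c in \<open>auto simp: P_def E_def\<close>)
  obtain W where W: "\<And>t. (W has_real_derivative - (q * (x1 t)^2)) (at t)" "(W \<longlongrightarrow> 0) at_top"
    "W 0 = q / (2*a*c) * P 0"
    by (rule Lyapunov_output_energy[OF dP _ _ _ lim]) (use a c in \<open>auto simp: P_def E_def\<close>)
  moreover have "q / (2*a*c) * P 0 = q * c / (2 * a)"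
    using a c init unfolding P_def by (simp add: power2_eq_square)
  ultimately show ?thesis by (intro that[OF W(1,2)]) simp
qed

definition dapi_attenuation :: "real \<Rightarrow> real \<Rightarrow> real \<Rightarrow> real \<Rightarrow> real" where
  "dapi_attenuation a c e f = ((c + f) * f + a) / (a + (c + f) * (e + f))"

lemma dapi_attenuation_less_1:
  assumes "a > 0" "c > 0" "e > 0" "f > 0"
  shows "dapi_attenuation a c e f < 1"
proof -
  have "(c + f) * f + a < a + (c + f) * (e + f)"
    using assms by (simp add: algebra_simps add_pos_pos)
  then show ?thesis
    using assms unfolding dapi_attenuation_def by (subst divide_less_eq_1_pos) (auto intro: add_pos_pos)
qed

text \<open>
  The quadratic form below solves the Lyapunov equation \<open>A\<^sup>T P + P A = -\<kappa> e\<^sub>1 e\<^sub>1\<^sup>T\<close> of the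
  mode equations, with \<open>\<kappa> = 2acf(c + f)(a + (c + f)(e + f))\<close>.
\<close>

definition dapi_lyapunov :: "real \<Rightarrow> real \<Rightarrow> real \<Rightarrow> real \<Rightarrow> real \<Rightarrow> real \<Rightarrow> real \<Rightarrow> real" where
  "dapi_lyapunov a c e f x1 x2 x3 =
    ((c+f)*c*x3 + (c+f)*f*x2 + (c*(c+f)*(e+f) - a*f)*x1)^2 + a*f*(c+f)*(x2 + (c+f)*x1)^2
    + a*c*f*(a + (c+f)*(e+f))*x1^2"

lemma dapi_lyapunov_bound:
  assumes pos: "a > 0" "c > 0" "e > 0" "f > 0"
  obtains K where "K > 0"
    "\<And>x y z. dapi_lyapunov a c e f x y z + (e*a*x^2 + e*y^2 + c*z^2) \<le> K * (x^2 + y^2 + z^2)"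
proof
  define w where "w = c + f"
  define g where "g = c*w*(e+f) - a*f"
  define K where "K = (g^2 + (w*f)^2 + (w*c)^2) + a*f*w*(w^2 + 1) + a*c*f*(a + w*(e+f)) + e*a + e + c"
  have pos': "0 \<le> a*f*w" "0 \<le> a*c*f*(a + w*(e+f))" "0 \<le> e*a"
    unfolding w_def using pos by (simp_all add: add_nonneg_nonneg)
  show "K > 0" unfolding K_def using pos pos' by (intro add_nonneg_pos add_nonneg_nonneg) auto
  fix x y z :: real
  define N where "N = x^2 + y^2 + z^2"
  have N: "x^2 \<le> N" "y^2 \<le> N" "z^2 \<le> N" unfolding N_def by simp_all
  have "(w*c*z + w*f*y + g*x)^2 \<le> (g^2 + (w*f)^2 + (w*c)^2) * N"
    using square_linear3_le[of "w*c" z "w*f" y g x] unfolding N_def by (simp add: algebra_simps)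
  moreover have "a*f*w * (y + w*x)^2 \<le> a*f*w * ((w^2 + 1) * N)"
    using square_linear3_le[of w x 1 y 0 z] unfolding N_def
    by (intro mult_left_mono pos') (simp add: algebra_simps)
  moreover have "a*c*f*(a + w*(e+f)) * x^2 \<le> a*c*f*(a + w*(e+f)) * N"
    "e*a*x^2 \<le> e*a*N" "e*y^2 \<le> e*N" "c*z^2 \<le> c*N"
    using N pos pos' by (simp_all add: mult_left_mono)
  ultimately show "dapi_lyapunov a c e f x y z + (e*a*x^2 + e*y^2 + c*z^2) \<le> K * (x^2 + y^2 + z^2)"
    unfolding dapi_lyapunov_def w_def[symmetric] g_def[symmetric] K_def N_def[symmetric]
    by (simp add: algebra_simps)
qed

context
  fixes a c e f :: real and x1 x2 x3 :: "real \<Rightarrow> real"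
  assumes pos: "a > 0" "c > 0" "e > 0" "f > 0"
    and d1: "\<And>t. (x1 has_real_derivative x2 t) (at t)"
    and d2: "\<And>t. (x2 has_real_derivative - a * x1 t - c * x2 t + c * x3 t) (at t)"
    and d3: "\<And>t. (x3 has_real_derivative - e * x2 t - f * x3 t) (at t)"
begin

lemma has_real_derivative_dapi_lyapunov:
  "((\<lambda>t. dapi_lyapunov a c e f (x1 t) (x2 t) (x3 t)) has_real_derivative
    - (2*a*c*f*(c+f)*(a + (c+f)*(e+f))) * (x1 t)^2) (at t)"
  unfolding dapi_lyapunov_def
  by (rule derivative_eq_intros d1 d2 d3 refl | simp add: power2_eq_square algebra_simps)+

lemma dapi_lyapunov_nonneg: "0 \<le> dapi_lyapunov a c e f x y z"
  unfolding dapi_lyapunov_def using pos by (intro add_nonneg_nonneg mult_nonneg_nonneg) auto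

lemma dapi_oscillator_tendsto_zero:
  "((\<lambda>t. dapi_lyapunov a c e f (x1 t) (x2 t) (x3 t) + (e*a*(x1 t)^2 + e*(x2 t)^2 + c*(x3 t)^2))
    \<longlongrightarrow> 0) at_top"
proof -
  define \<kappa> where "\<kappa> = 2*a*c*f*(c+f)*(a + (c+f)*(e+f))"
  have "\<kappa> > 0" unfolding \<kappa>_def using pos by (simp add: add_pos_pos)
  obtain K where "K > 0"
    and K: "\<And>x y z. dapi_lyapunov a c e f x y z + (e*a*x^2 + e*y^2 + c*z^2) \<le> K * (x^2 + y^2 + z^2)"
    using dapi_lyapunov_bound[OF pos] by blast
  show ?thesis
  proof (rule dissipative_tendsto_zero[where N="\<lambda>t. (x1 t)^2 + (x2 t)^2 + (x3 t)^2" and K=K])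
    show "((\<lambda>t. dapi_lyapunov a c e f (x1 t) (x2 t) (x3 t) + (e*a*(x1 t)^2 + e*(x2 t)^2 + c*(x3 t)^2))
        has_real_derivative - \<kappa> * (x1 t)^2 - 2*e*c*(x2 t)^2 - 2*c*f*(x3 t)^2) (at t)" for t
      unfolding \<kappa>_def
      by (rule derivative_eq_intros has_real_derivative_dapi_lyapunov d1 d2 d3 refl
          | simp add: power2_eq_square algebra_simps)+
    show "- \<kappa> * (x1 t)^2 - 2*e*c*(x2 t)^2 - 2*c*f*(x3 t)^2
        \<le> - min \<kappa> (min (2*e*c) (2*c*f)) * ((x1 t)^2 + (x2 t)^2 + (x3 t)^2)" for t
    proof -
      have "min \<kappa> (min (2*e*c) (2*c*f)) * (x1 t)^2 \<le> \<kappa> * (x1 t)^2"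
        "min \<kappa> (min (2*e*c) (2*c*f)) * (x2 t)^2 \<le> (2*e*c) * (x2 t)^2"
        "min \<kappa> (min (2*e*c) (2*c*f)) * (x3 t)^2 \<le> (2*c*f) * (x3 t)^2"
        by (intro mult_right_mono; simp)+
      then show ?thesis by (simp add: algebra_simps)
    qed
    show "min \<kappa> (min (2*e*c) (2*c*f)) > 0" using \<open>\<kappa> > 0\<close> pos by simp
  qed (use \<open>K > 0\<close> K pos dapi_lyapunov_nonneg in \<open>auto intro!: add_nonneg_nonneg\<close>)
qed

lemma dapi_oscillator_output_energy:
  assumes init: "x1 0 = 0" "x2 0 = c" "x3 0 = 0"
  obtains W where "\<And>t. (W has_real_derivative - (q * (x1 t)^2)) (at t)" "(W \<longlongrightarrow> 0) at_top"
    "W 0 = q * c / (2 * a) * dapi_attenuation a c e f"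
proof -
  define \<kappa> where "\<kappa> = 2*a*c*f*(c+f)*(a + (c+f)*(e+f))"
  have "\<kappa> > 0" unfolding \<kappa>_def using pos by (simp add: add_pos_pos)
  obtain W where W: "\<And>t. (W has_real_derivative - (q * (x1 t)^2)) (at t)" "(W \<longlongrightarrow> 0) at_top"
    "W 0 = q / \<kappa> * dapi_lyapunov a c e f (x1 0) (x2 0) (x3 0)"
    using Lyapunov_output_energy[OF has_real_derivative_dapi_lyapunov[folded \<kappa>_def] \<open>\<kappa> > 0\<close>
        dapi_lyapunov_nonneg _ dapi_oscillator_tendsto_zero] pos
    by (metis add_nonneg_nonneg mult_nonneg_nonneg less_imp_le zero_le_power2)
  have field: "q / (2*a*c*f*w*D) * (w*f*c^2*X) = q*c / (2*a) * (X/D)" if "w \<noteq> 0" "D \<noteq> 0"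
    for w D X
    using pos that by (simp add: field_simps power2_eq_square)
  have P0: "dapi_lyapunov a c e f (x1 0) (x2 0) (x3 0) = (c+f)*f*c^2 * ((c+f)*f + a)"
    unfolding init dapi_lyapunov_def by (simp add: power2_eq_square algebra_simps)
  have "0 < (c+f)*(e+f)" using pos by simp
  then have "c + f \<noteq> 0" "a + (c+f)*(e+f) \<noteq> 0" using pos by linarith+
  then have "q / \<kappa> * dapi_lyapunov a c e f (x1 0) (x2 0) (x3 0)
      = q * c / (2 * a) * dapi_attenuation a c e f"
    unfolding \<kappa>_def dapi_attenuation_def P0 by (rule field)
  with W show ?thesis by (intro that[OF W(1,2)]) simp
qed

end

section \<open>Block states and eigenmodes\<close>

lemma sum_UNIV_Plus:
  "(\<Sum>c\<in>(UNIV::('a::finite + 'b::finite) set). g c) = (\<Sum>i\<in>UNIV. g (Inl i)) + (\<Sum>i\<in>UNIV. g (Inr i))"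
proof -
  have "(\<Sum>c\<in>(UNIV::('a + 'b) set). g c) = (\<Sum>c\<in>(UNIV <+> UNIV). g c)" by simp
  also have "\<dots> = (\<Sum>i\<in>UNIV. g (Inl i)) + (\<Sum>i\<in>UNIV. g (Inr i))"
    by (subst sum.Plus) (auto simp: comp_def)
  finally show ?thesis .
qed

lemma uminus_matrix_vector_mult: "(- A) *v x = - (A *v (x::real^'n))" for A :: "real^'n^'m"
  by (simp add: vec_eq_iff matrix_vector_mult_def sum_negf)

lemma symmetric_eigenvector_inner:
  fixes L :: "real^'n^'n"
  assumes "transpose L = L" "L *v v = lam *\<^sub>R v"
  shows "v \<bullet> (L *v x) = lam * (v \<bullet> x)"
  using symmetric_matrix_inner[OF assms(1), of v x] assms(2) by simp

lemma has_real_derivative_inner_block: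
  assumes "\<And>r. ((\<lambda>t. Z t $ r) has_real_derivative Z' $ r) (at t)"
  shows "((\<lambda>t. v \<bullet> (\<chi> i. Z t $ f i)) has_real_derivative v \<bullet> (\<chi> i. Z' $ f i)) (at t)"
  unfolding inner_vec_def by (simp, intro DERIV_sum DERIV_cmult assms)

definition state2 :: "real^'n \<Rightarrow> real^'n \<Rightarrow> real^('n+'n)" where
  "state2 a b = (\<chi> r. case r of Inl i \<Rightarrow> a$i | Inr i \<Rightarrow> b$i)"

definition theta2 :: "real^('n+'n) \<Rightarrow> real^'n" where "theta2 z = (\<chi> i. z $ Inl i)"
definition omega2 :: "real^('n+'n) \<Rightarrow> real^'n" where "omega2 z = (\<chi> i. z $ Inr i)"

lemma state2_sel [simp]: "theta2 (state2 a b) = a" "omega2 (state2 a b) = b"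
  by (simp_all add: state2_def theta2_def omega2_def vec_eq_iff)

lemma blk2_mv:
  "blk2 F *v z = state2 (F 0 0 *v theta2 z + F 0 1 *v omega2 z) (F 1 0 *v theta2 z + F 1 1 *v omega2 z)"
proof -
  have "(blk2 F *v z) $ r
      = state2 (F 0 0 *v theta2 z + F 0 1 *v omega2 z) (F 1 0 *v theta2 z + F 1 1 *v omega2 z) $ r" for r
    by (cases r) (simp_all add: matrix_vector_mult_def blk2_def sum_UNIV_Plus state2_def theta2_def
        omega2_def)
  then show ?thesis by (simp add: vec_eq_iff)
qed

lemma blkcol2_mv: "blkcol2 F *v v = state2 (F 0 *v v) (F 1 *v v)"
proof -
  have "(blkcol2 F *v v) $ r = state2 (F 0 *v v) (F 1 *v v) $ r" for r
    by (cases r) (simp_all add: matrix_vector_mult_def blkcol2_def state2_def)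
  then show ?thesis by (simp add: vec_eq_iff)
qed

lemma blkrow2_mv: "blkrow2 F *v z = F 0 *v theta2 z + F 1 *v omega2 z"
  by (simp add: vec_eq_iff matrix_vector_mult_def blkrow2_def sum_UNIV_Plus theta2_def omega2_def)

lemma A_std_mv: "A_std m \<tau> LB *v z
  = state2 (omega2 z) (- ((m/\<tau>) *\<^sub>R (LB *v theta2 z)) - (1/\<tau>) *\<^sub>R omega2 z)"
  unfolding A_std_def blk2_mv
  by (simp add: uminus_matrix_vector_mult scaleR_matrix_vector_assoc[symmetric])

lemma B_std_mv: "B_std \<tau> *v v = state2 0 ((1/\<tau>) *\<^sub>R v)"
  unfolding B_std_def blkcol2_mv by (simp add: scaleR_matrix_vector_assoc[symmetric])

lemma C_std_mv: "C_std LG *v z = psd_sqrt LG *v theta2 z"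
  unfolding C_std_def blkrow2_mv by simp

definition state3 :: "real^'n \<Rightarrow> real^'n \<Rightarrow> real^'n \<Rightarrow> real^(('n+'n)+'n)" where
  "state3 a b c = (\<chi> r. case r of Inl (Inl i) \<Rightarrow> a$i | Inl (Inr i) \<Rightarrow> b$i | Inr i \<Rightarrow> c$i)"

definition theta3 :: "real^(('n+'n)+'n) \<Rightarrow> real^'n" where "theta3 z = (\<chi> i. z $ Inl (Inl i))"
definition omega3 :: "real^(('n+'n)+'n) \<Rightarrow> real^'n" where "omega3 z = (\<chi> i. z $ Inl (Inr i))"
definition Omega3 :: "real^(('n+'n)+'n) \<Rightarrow> real^'n" where "Omega3 z = (\<chi> i. z $ Inr i)"

lemma state3_sel [simp]:
  "theta3 (state3 a b c) = a" "omega3 (state3 a b c) = b" "Omega3 (state3 a b c) = c"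
  by (simp_all add: state3_def theta3_def omega3_def Omega3_def vec_eq_iff)

lemma sum_cases3:
  assumes "\<And>i. P (Inl (Inl i))" "\<And>i. P (Inl (Inr i))" "\<And>i. P (Inr i)"
  shows "P r"
proof (cases r)
  case (Inl a) then show ?thesis using assms by (cases a) auto
qed (use assms in auto)

lemma blk3_mv: "blk3 F *v z = state3 (F 0 0 *v theta3 z + F 0 1 *v omega3 z + F 0 2 *v Omega3 z)
   (F 1 0 *v theta3 z + F 1 1 *v omega3 z + F 1 2 *v Omega3 z)
   (F 2 0 *v theta3 z + F 2 1 *v omega3 z + F 2 2 *v Omega3 z)"
proof -
  have "(blk3 F *v z) $ r = state3 (F 0 0 *v theta3 z + F 0 1 *v omega3 z + F 0 2 *v Omega3 z)
   (F 1 0 *v theta3 z + F 1 1 *v omega3 z + F 1 2 *v Omega3 z)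
   (F 2 0 *v theta3 z + F 2 1 *v omega3 z + F 2 2 *v Omega3 z) $ r" for r
    by (rule sum_cases3[of _ r]) (simp_all add: matrix_vector_mult_def blk3_def sum_UNIV_Plus
        state3_def theta3_def omega3_def Omega3_def)
  then show ?thesis by (simp add: vec_eq_iff)
qed

lemma blkcol3_mv: "blkcol3 F *v v = state3 (F 0 *v v) (F 1 *v v) (F 2 *v v)"
proof -
  have "(blkcol3 F *v v) $ r = state3 (F 0 *v v) (F 1 *v v) (F 2 *v v) $ r" for r
    by (rule sum_cases3[of _ r]) (simp_all add: matrix_vector_mult_def blkcol3_def state3_def)
  then show ?thesis by (simp add: vec_eq_iff)
qed

lemma blkrow3_mv: "blkrow3 F *v z = F 0 *v theta3 z + F 1 *v omega3 z + F 2 *v Omega3 z"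
  by (simp add: vec_eq_iff matrix_vector_mult_def blkrow3_def sum_UNIV_Plus theta3_def omega3_def
      Omega3_def)

lemma A_dapi_mv: "A_dapi m \<tau> k LB LC *v z = state3 (omega3 z)
   (- ((m/\<tau>) *\<^sub>R (LB *v theta3 z)) - (1/\<tau>) *\<^sub>R omega3 z + (1/\<tau>) *\<^sub>R Omega3 z)
   (- ((1/k) *\<^sub>R omega3 z) - (1/k) *\<^sub>R (LC *v Omega3 z))"
  unfolding A_dapi_def blk3_mv
  by (simp add: uminus_matrix_vector_mult scaleR_matrix_vector_assoc[symmetric])

lemma B_dapi_mv: "B_dapi \<tau> *v v = state3 0 ((1/\<tau>) *\<^sub>R v) 0"
  unfolding B_dapi_def blkcol3_mv by (simp add: scaleR_matrix_vector_assoc[symmetric])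

lemma C_dapi_mv: "C_dapi LG *v z = psd_sqrt LG *v theta3 z"
  unfolding C_dapi_def blkrow3_mv by simp

definition mode_proj2 :: "real^'n \<Rightarrow> real^('n+'n)^('n+'n)" where
  "mode_proj2 v = blk2 (\<lambda>p q. if p = q then outer v else 0)"

definition mode_proj3 :: "real^'n \<Rightarrow> real^(('n+'n)+'n)^(('n+'n)+'n)" where
  "mode_proj3 v = blk3 (\<lambda>p q. if p = q then outer v else 0)"

lemma mode_proj2_mv: "mode_proj2 v *v z = state2 ((v \<bullet> theta2 z) *\<^sub>R v) ((v \<bullet> omega2 z) *\<^sub>R v)"
  unfolding mode_proj2_def blk2_mv by (simp add: outer_mv)

lemma mode_proj3_mv: "mode_proj3 v *v z
  = state3 ((v \<bullet> theta3 z) *\<^sub>R v) ((v \<bullet> omega3 z) *\<^sub>R v) ((v \<bullet> Omega3 z) *\<^sub>R v)"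
  unfolding mode_proj3_def blk3_mv by (simp add: outer_mv)

context
  fixes L :: "real^'n^'n" and v :: "real^'n" and lam :: real
  assumes sym: "transpose L = L" and ev: "L *v v = lam *\<^sub>R v" and nv: "norm v = 1"
begin

lemma mode_proj2_A_std_commute: "mode_proj2 v ** A_std m \<tau> L = A_std m \<tau> L ** mode_proj2 v"
proof -
  have "mode_proj2 v *v (A_std m \<tau> L *v z) = A_std m \<tau> L *v (mode_proj2 v *v z)" for z
    unfolding mode_proj2_mv A_std_mv
    by (simp add: symmetric_eigenvector_inner[OF sym ev] matrix_vector_mult_scaleR ev
        inner_diff_right inner_add_right algebra_simps)
  then show ?thesis by (simp add: matrix_eq matrix_vector_mul_assoc[symmetric])
qed

lemma mode_proj3_A_dapi_commute:
  "mode_proj3 v ** A_dapi m \<tau> k L (\<gamma> *\<^sub>R L) = A_dapi m \<tau> k L (\<gamma> *\<^sub>R L) ** mode_proj3 v"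
proof -
  have "mode_proj3 v *v (A_dapi m \<tau> k L (\<gamma> *\<^sub>R L) *v z)
      = A_dapi m \<tau> k L (\<gamma> *\<^sub>R L) *v (mode_proj3 v *v z)" for z
    unfolding mode_proj3_mv A_dapi_mv
    by (simp add: symmetric_eigenvector_inner[OF sym ev] scaleR_matrix_vector_assoc[symmetric]
        matrix_vector_mult_scaleR ev inner_diff_right inner_add_right algebra_simps)
  then show ?thesis by (simp add: matrix_eq matrix_vector_mul_assoc[symmetric])
qed

lemma std_impulse_response_mode:
  fixes m \<tau> :: real
  defines "Z \<equiv> \<lambda>t. mexp (t *\<^sub>R A_std m \<tau> L) *v (B_std \<tau> *v v)"
  shows "Z t = state2 ((v \<bullet> theta2 (Z t)) *\<^sub>R v) ((v \<bullet> omega2 (Z t)) *\<^sub>R v)"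
    and "((\<lambda>t. v \<bullet> theta2 (Z t)) has_real_derivative v \<bullet> omega2 (Z t)) (at t)"
    and "((\<lambda>t. v \<bullet> omega2 (Z t)) has_real_derivative
          - (m/\<tau> * lam) * (v \<bullet> theta2 (Z t)) - 1/\<tau> * (v \<bullet> omega2 (Z t))) (at t)"
    and "v \<bullet> theta2 (Z 0) = 0" "v \<bullet> omega2 (Z 0) = 1/\<tau>"
proof -
  define A where "A = A_std m \<tau> L"
  have vv: "v \<bullet> v = 1" using nv by (simp add: norm_eq_1)
  have "mode_proj2 v *v (B_std \<tau> *v v) = B_std \<tau> *v v"
    unfolding mode_proj2_mv B_std_mv using vv by simp
  from mexp_mv_fixed[OF mode_proj2_A_std_commute this, of t, folded A_def Z_def]
  show "Z t = state2 ((v \<bullet> theta2 (Z t)) *\<^sub>R v) ((v \<bullet> omega2 (Z t)) *\<^sub>R v)"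
    unfolding mode_proj2_mv A_def Z_def by simp
  have d: "((\<lambda>t. Z t $ r) has_real_derivative (A *v Z t) $ r) (at t)" for r
    unfolding Z_def A_def by (rule has_real_derivative_mexp_mv)
  have AZ: "A *v Z t = state2 (omega2 (Z t)) (- ((m/\<tau>) *\<^sub>R (L *v theta2 (Z t))) - (1/\<tau>) *\<^sub>R omega2 (Z t))"
    unfolding A_def by (rule A_std_mv)
  show "((\<lambda>t. v \<bullet> theta2 (Z t)) has_real_derivative v \<bullet> omega2 (Z t)) (at t)"
    using has_real_derivative_inner_block[OF d, of v Inl] unfolding theta2_def[symmetric] AZ by simp
  show "((\<lambda>t. v \<bullet> omega2 (Z t)) has_real_derivative
          - (m/\<tau> * lam) * (v \<bullet> theta2 (Z t)) - 1/\<tau> * (v \<bullet> omega2 (Z t))) (at t)"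
    using has_real_derivative_inner_block[OF d, of v Inr] unfolding omega2_def[symmetric] AZ
    by (simp add: symmetric_eigenvector_inner[OF sym ev] inner_diff_right mult.assoc)
  have "Z 0 = state2 0 ((1/\<tau>) *\<^sub>R v)" unfolding Z_def by (simp add: B_std_mv)
  then show "v \<bullet> theta2 (Z 0) = 0" "v \<bullet> omega2 (Z 0) = 1/\<tau>" using vv by simp_all
qed

lemma dapi_impulse_response_mode:
  fixes m \<tau> k \<gamma> :: real
  defines "Z \<equiv> \<lambda>t. mexp (t *\<^sub>R A_dapi m \<tau> k L (\<gamma> *\<^sub>R L)) *v (B_dapi \<tau> *v v)"
  shows "Z t = state3 ((v \<bullet> theta3 (Z t)) *\<^sub>R v) ((v \<bullet> omega3 (Z t)) *\<^sub>R v) ((v \<bullet> Omega3 (Z t)) *\<^sub>R v)"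
    and "((\<lambda>t. v \<bullet> theta3 (Z t)) has_real_derivative v \<bullet> omega3 (Z t)) (at t)"
    and "((\<lambda>t. v \<bullet> omega3 (Z t)) has_real_derivative
          - (m/\<tau> * lam) * (v \<bullet> theta3 (Z t)) - 1/\<tau> * (v \<bullet> omega3 (Z t)) + 1/\<tau> * (v \<bullet> Omega3 (Z t))) (at t)"
    and "((\<lambda>t. v \<bullet> Omega3 (Z t)) has_real_derivative
          - (1/k) * (v \<bullet> omega3 (Z t)) - \<gamma>/k * lam * (v \<bullet> Omega3 (Z t))) (at t)"
    and "v \<bullet> theta3 (Z 0) = 0" "v \<bullet> omega3 (Z 0) = 1/\<tau>" "v \<bullet> Omega3 (Z 0) = 0"
proof -
  define A where "A = A_dapi m \<tau> k L (\<gamma> *\<^sub>R L)"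
  have vv: "v \<bullet> v = 1" using nv by (simp add: norm_eq_1)
  have "mode_proj3 v *v (B_dapi \<tau> *v v) = B_dapi \<tau> *v v"
    unfolding mode_proj3_mv B_dapi_mv using vv by simp
  from mexp_mv_fixed[OF mode_proj3_A_dapi_commute this, of t, folded A_def Z_def]
  show "Z t = state3 ((v \<bullet> theta3 (Z t)) *\<^sub>R v) ((v \<bullet> omega3 (Z t)) *\<^sub>R v) ((v \<bullet> Omega3 (Z t)) *\<^sub>R v)"
    unfolding mode_proj3_mv A_def Z_def by simp
  have d: "((\<lambda>t. Z t $ r) has_real_derivative (A *v Z t) $ r) (at t)" for r
    unfolding Z_def A_def by (rule has_real_derivative_mexp_mv)
  have AZ: "A *v Z t = state3 (omega3 (Z t))
     (- ((m/\<tau>) *\<^sub>R (L *v theta3 (Z t))) - (1/\<tau>) *\<^sub>R omega3 (Z t) + (1/\<tau>) *\<^sub>R Omega3 (Z t))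
     (- ((1/k) *\<^sub>R omega3 (Z t)) - (1/k) *\<^sub>R ((\<gamma> *\<^sub>R L) *v Omega3 (Z t)))"
    unfolding A_def by (rule A_dapi_mv)
  show "((\<lambda>t. v \<bullet> theta3 (Z t)) has_real_derivative v \<bullet> omega3 (Z t)) (at t)"
    using has_real_derivative_inner_block[OF d, of v "\<lambda>i. Inl (Inl i)"]
    unfolding theta3_def[symmetric] AZ by simp
  show "((\<lambda>t. v \<bullet> omega3 (Z t)) has_real_derivative
          - (m/\<tau> * lam) * (v \<bullet> theta3 (Z t)) - 1/\<tau> * (v \<bullet> omega3 (Z t)) + 1/\<tau> * (v \<bullet> Omega3 (Z t))) (at t)"
    using has_real_derivative_inner_block[OF d, of v "\<lambda>i. Inl (Inr i)"]
    unfolding omega3_def[symmetric] AZ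
    by (simp add: symmetric_eigenvector_inner[OF sym ev] inner_diff_right inner_add_right mult.assoc)
  show "((\<lambda>t. v \<bullet> Omega3 (Z t)) has_real_derivative
          - (1/k) * (v \<bullet> omega3 (Z t)) - \<gamma>/k * lam * (v \<bullet> Omega3 (Z t))) (at t)"
    using has_real_derivative_inner_block[OF d, of v Inr] unfolding Omega3_def[symmetric] AZ
    by (simp add: symmetric_eigenvector_inner[OF sym ev] inner_diff_right
        scaleR_matrix_vector_assoc[symmetric] mult.assoc)
  have "Z 0 = state3 0 ((1/\<tau>) *\<^sub>R v) 0" unfolding Z_def by (simp add: B_dapi_mv)
  then show "v \<bullet> theta3 (Z 0) = 0" "v \<bullet> omega3 (Z 0) = 1/\<tau>" "v \<bullet> Omega3 (Z 0) = 0"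
    using vv by simp_all
qed

end

section \<open>The two \<open>H\<^sub>2\<close> norms\<close>

lemma psd_eigenvalue_nonneg:
  fixes L :: "real^'n^'n"
  assumes "\<And>x. 0 \<le> x \<bullet> (L *v x)" "L *v v = lam *\<^sub>R v" "v \<noteq> 0"
  shows "0 \<le> lam"
proof -
  have "0 \<le> lam * (v \<bullet> v)" using assms(1)[of v] assms(2) by simp
  moreover have "0 < v \<bullet> v" using assms(3) by simp
  ultimately show ?thesis by (metis zero_le_mult_iff not_le)
qed

lemma norm_psd_sqrt_mv_eigenvector:
  fixes L :: "real^'n^'n"
  assumes sym: "transpose L = L" and psd: "\<And>x. 0 \<le> x \<bullet> (L *v x)" and "\<alpha> \<ge> 0"
    and ev: "L *v v = lam *\<^sub>R v" and nv: "norm v = 1"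
  shows "(norm (psd_sqrt (\<alpha> *\<^sub>R L) *v v))^2 = \<alpha> * lam"
proof -
  define S where "S = psd_sqrt (\<alpha> *\<^sub>R L)"
  have "transpose (\<alpha> *\<^sub>R L) = \<alpha> *\<^sub>R L" "\<And>x. 0 \<le> x \<bullet> ((\<alpha> *\<^sub>R L) *v x)"
    using sym psd \<open>\<alpha> \<ge> 0\<close> by (simp_all add: transpose_scalar scaleR_matrix_vector_assoc[symmetric])
  note S = psd_sqrt[OF this, folded S_def]
  have "(norm (S *v v))^2 = v \<bullet> (S *v (S *v v))"
    using symmetric_matrix_inner[of S v "S *v v"] S(1) unfolding psd_def
    by (simp add: power2_norm_eq_inner)
  also have "\<dots> = \<alpha> * lam"
    using S(2) ev nv by (simp add: matrix_vector_mul_assoc scaleR_matrix_vector_assoc[symmetric]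
        norm_eq_1)
  finally show ?thesis unfolding S_def .
qed

locale psd_eigenbasis =
  fixes L :: "real^'n^'n" and Bs :: "(real^'n) set" and lam :: "real^'n \<Rightarrow> real"
  assumes sym: "transpose L = L" and psd: "\<And>x. 0 \<le> x \<bullet> (L *v x)"
    and Bs: "onb Bs" and eig: "\<And>v. v \<in> Bs \<Longrightarrow> L *v v = lam v *\<^sub>R v"
begin

lemma eigenbasis_unit: "v \<in> Bs \<Longrightarrow> norm v = 1"
  using Bs unfolding onb_def by blast

lemma eigenvalue_nonneg: "v \<in> Bs \<Longrightarrow> 0 \<le> lam v"
  using psd_eigenvalue_nonneg[OF psd eig] eigenbasis_unit by fastforce

lemma h2sq_std_eigenbasis:
  assumes pos: "\<alpha> > 0" "m > 0" "\<tau> > 0"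
  shows "h2sq (A_std m \<tau> L) (B_std \<tau>) (C_std (\<alpha> *\<^sub>R L))
    = (\<Sum>v\<in>Bs. if lam v = 0 then 0 else \<alpha> / (2*m))"
proof -
  have "\<exists>W. (\<forall>t. (W has_real_derivative
        - ((norm (C_std (\<alpha> *\<^sub>R L) *v (mexp (t *\<^sub>R A_std m \<tau> L) *v (B_std \<tau> *v v))))^2)) (at t))
      \<and> (W \<longlongrightarrow> 0) at_top \<and> W 0 = (if lam v = 0 then 0 else \<alpha> / (2*m))" if v: "v \<in> Bs" for v
  proof -
    define x where "x t = v \<bullet> theta2 (mexp (t *\<^sub>R A_std m \<tau> L) *v (B_std \<tau> *v v))" for t
    define y where "y t = v \<bullet> omega2 (mexp (t *\<^sub>R A_std m \<tau> L) *v (B_std \<tau> *v v))" for t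
    note mode = std_impulse_response_mode[OF sym eig[OF v] eigenbasis_unit[OF v],
        where m=m and \<tau>=\<tau>, folded x_def y_def]
    have out: "(norm (C_std (\<alpha> *\<^sub>R L) *v (mexp (t *\<^sub>R A_std m \<tau> L) *v (B_std \<tau> *v v))))^2
        = \<alpha> * lam v * (x t)^2" for t
      using norm_psd_sqrt_mv_eigenvector[OF sym psd _ eig[OF v] eigenbasis_unit[OF v], of \<alpha>] pos
      by (subst mode(1)) (simp add: C_std_mv matrix_vector_mult_scaleR power_mult_distrib)
    show ?thesis
    proof (cases "lam v = 0")
      case True
      then show ?thesis unfolding out by (intro exI[of _ "\<lambda>_. 0"]) simp
    next
      case False
      then have "lam v > 0" using eigenvalue_nonneg[OF v] by simp
      then obtain W where "\<And>t. (W has_real_derivative - (\<alpha> * lam v * (x t)^2)) (at t)"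
        "(W \<longlongrightarrow> 0) at_top" "W 0 = \<alpha> * lam v * (1/\<tau>) / (2 * (m/\<tau> * lam v))"
        using damped_oscillator_output_energy[of "m/\<tau> * lam v" "1/\<tau>" x y] mode(2-5) pos
        by (metis (no_types, lifting) divide_pos_pos mult_pos_pos zero_less_one)
      with False pos show ?thesis unfolding out by (intro exI[of _ W]) auto
    qed
  qed
  then show ?thesis by (rule h2sq_eq_sum_Lyapunov[OF Bs])
qed

lemma h2sq_dapi_eigenbasis:
  assumes pos: "\<alpha> > 0" "m > 0" "\<tau> > 0" and "k > 0" "\<gamma> > 0"
  shows "h2sq (A_dapi m \<tau> k L (\<gamma> *\<^sub>R L)) (B_dapi \<tau>) (C_dapi (\<alpha> *\<^sub>R L))
    = (\<Sum>v\<in>Bs. if lam v = 0 then 0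
        else \<alpha> / (2*m) * dapi_attenuation (m/\<tau> * lam v) (1/\<tau>) (1/k) (\<gamma>/k * lam v))"
proof -
  have "\<exists>W. (\<forall>t. (W has_real_derivative - ((norm (C_dapi (\<alpha> *\<^sub>R L) *v
          (mexp (t *\<^sub>R A_dapi m \<tau> k L (\<gamma> *\<^sub>R L)) *v (B_dapi \<tau> *v v))))^2)) (at t))
      \<and> (W \<longlongrightarrow> 0) at_top \<and> W 0 = (if lam v = 0 then 0
        else \<alpha> / (2*m) * dapi_attenuation (m/\<tau> * lam v) (1/\<tau>) (1/k) (\<gamma>/k * lam v))"
    if v: "v \<in> Bs" for v
  proof -
    define x where "x t = v \<bullet> theta3 (mexp (t *\<^sub>R A_dapi m \<tau> k L (\<gamma> *\<^sub>R L)) *v (B_dapi \<tau> *v v))" for t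
    define y where "y t = v \<bullet> omega3 (mexp (t *\<^sub>R A_dapi m \<tau> k L (\<gamma> *\<^sub>R L)) *v (B_dapi \<tau> *v v))" for t
    define z where "z t = v \<bullet> Omega3 (mexp (t *\<^sub>R A_dapi m \<tau> k L (\<gamma> *\<^sub>R L)) *v (B_dapi \<tau> *v v))" for t
    note mode = dapi_impulse_response_mode[OF sym eig[OF v] eigenbasis_unit[OF v],
        where m=m and \<tau>=\<tau> and k=k and \<gamma>=\<gamma>, folded x_def y_def z_def]
    have out: "(norm (C_dapi (\<alpha> *\<^sub>R L) *v
        (mexp (t *\<^sub>R A_dapi m \<tau> k L (\<gamma> *\<^sub>R L)) *v (B_dapi \<tau> *v v))))^2 = \<alpha> * lam v * (x t)^2" for t
      using norm_psd_sqrt_mv_eigenvector[OF sym psd _ eig[OF v] eigenbasis_unit[OF v], of \<alpha>] pos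
      by (subst mode(1)) (simp add: C_dapi_mv matrix_vector_mult_scaleR power_mult_distrib)
    show ?thesis
    proof (cases "lam v = 0")
      case True
      then show ?thesis unfolding out by (intro exI[of _ "\<lambda>_. 0"]) simp
    next
      case False
      then have "lam v > 0" using eigenvalue_nonneg[OF v] by simp
      then obtain W where "\<And>t. (W has_real_derivative - (\<alpha> * lam v * (x t)^2)) (at t)"
        "(W \<longlongrightarrow> 0) at_top" "W 0 = \<alpha> * lam v * (1/\<tau>) / (2 * (m/\<tau> * lam v))
          * dapi_attenuation (m/\<tau> * lam v) (1/\<tau>) (1/k) (\<gamma>/k * lam v)"
        using dapi_oscillator_output_energy[of "m/\<tau> * lam v" "1/\<tau>" "1/k" "\<gamma>/k * lam v" x y z]
          mode(2-7) pos assms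
        by (metis (no_types, lifting) divide_pos_pos mult_pos_pos zero_less_one)
      with False pos show ?thesis unfolding out by (intro exI[of _ W]) auto
    qed
  qed
  then show ?thesis by (rule h2sq_eq_sum_Lyapunov[OF Bs])
qed

lemma h2sq_dapi_less_std:
  assumes "\<alpha> > 0" "m > 0" "\<tau> > 0" "k > 0" "\<gamma> > 0" and "L \<noteq> 0"
  shows "h2sq (A_dapi m \<tau> k L (\<gamma> *\<^sub>R L)) (B_dapi \<tau>) (C_dapi (\<alpha> *\<^sub>R L))
    < h2sq (A_std m \<tau> L) (B_std \<tau>) (C_std (\<alpha> *\<^sub>R L))"
proof -
  have less: "\<alpha> / (2*m) * dapi_attenuation (m/\<tau> * lam v) (1/\<tau>) (1/k) (\<gamma>/k * lam v) < \<alpha> / (2*m)"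
    if "v \<in> Bs" "lam v \<noteq> 0" for v
  proof -
    have "lam v > 0" using eigenvalue_nonneg[OF that(1)] that(2) by simp
    then have "dapi_attenuation (m/\<tau> * lam v) (1/\<tau>) (1/k) (\<gamma>/k * lam v) < 1"
      using assms by (intro dapi_attenuation_less_1) auto
    moreover have "\<alpha> / (2*m) > 0" using assms by simp
    ultimately show ?thesis by (metis mult.right_neutral mult_strict_left_mono)
  qed
  obtain u where u: "u \<in> Bs" "lam u \<noteq> 0"
    using onb_matrix_eq_0[OF Bs] eig \<open>L \<noteq> 0\<close> by fastforce
  have "finite Bs" using Bs unfolding onb_def by simp
  then show ?thesis
    unfolding h2sq_std_eigenbasis[OF assms(1-3)] h2sq_dapi_eigenbasis[OF assms(1-5)]
  proof (rule sum_strict_mono_ex1)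
    show "\<forall>v\<in>Bs. (if lam v = 0 then 0
        else \<alpha> / (2*m) * dapi_attenuation (m/\<tau> * lam v) (1/\<tau>) (1/k) (\<gamma>/k * lam v))
      \<le> (if lam v = 0 then 0 else \<alpha> / (2*m))"
      using less by (simp add: less_imp_le)
    show "\<exists>v\<in>Bs. (if lam v = 0 then 0
        else \<alpha> / (2*m) * dapi_attenuation (m/\<tau> * lam v) (1/\<tau>) (1/k) (\<gamma>/k * lam v))
      < (if lam v = 0 then 0 else \<alpha> / (2*m))"
      using u less[OF u] by (intro bexI[of _ u]) simp_all
  qed
qed

end

theorem mainTheorem2:
  fixes b :: "'n::finite \<Rightarrow> 'n \<Rightarrow> real"
    and \<alpha> m k \<tau> \<gamma> :: real
  assumes "CARD('n) \<ge> 2"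
    and "\<forall>i j. b i j = b j i"
    and "\<forall>i j. 0 \<le> b i j"
    and "connected_weights b"
    and "\<alpha> > 0" and "m > 0" and "k > 0" and "\<tau> > 0" and "\<gamma> > 0"
  shows "h2sq (A_dapi m \<tau> k (laplacian b) (\<gamma> *\<^sub>R laplacian b)) (B_dapi \<tau>)
             (C_dapi (\<alpha> *\<^sub>R laplacian b))
         < h2sq (A_std m \<tau> (laplacian b)) (B_std \<tau>) (C_std (\<alpha> *\<^sub>R laplacian b))"
proof -
  obtain Bs lam where Bs: "onb Bs" and eig: "\<And>v. v \<in> Bs \<Longrightarrow> laplacian b *v v = lam v *\<^sub>R v"
    using symmetric_eigenbasis[OF transpose_laplacian[OF assms(2)]] by blast
  interpret psd_eigenbasis "laplacian b" Bs lam
    using transpose_laplacian laplacian_quadratic_form_nonneg assms(2,3) Bs eig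
    by unfold_locales auto
  show ?thesis
    by (rule h2sq_dapi_less_std[OF assms(5,6,8,7,9) laplacian_neq_0[OF assms(1,4)]])
qed

end
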